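(* Let $X_1, X_2, \ldots$ be independent random variables taking values in $[0,1]$, and assume there exists $\mu_0 \in [0,1]$ such that $\mathbb{E}[X_t] = \mu_0$ for all $t$. For $\delta > 0$ let $$\beta(n,\delta) = 2\,\mathcal{T}\!\left(\frac{\ln(3n\sqrt{n}/\delta)}{2}\right) + 6\ln(1+\ln(n)),$$ and let $\hat\tau_\delta$ be the Bernoulli GLR change-point detector with threshold $\beta$: $$\hat\tau_{\delta} := \inf \left\{ n \in \mathbb{N}^* : \sup_{1 \le s < n} \left[s \, \mathrm{kl}\left(\hat{\mu}_{1:s},\hat{\mu}_{1:n}\right) + (n-s)\, \mathrm{kl}\left(\hat{\mu}_{s+1:n},\hat{\mu}_{1:n}\right)\right] \geq \beta(n,\delta)\right\}.$$ Then $\mathbb{P}(\hat\tau_\delta < \infty) \leq \delta$.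
   Context: For $k \le k'$, $\hat\mu_{k:k'} = \frac{1}{k'-k+1}\sum_{j=k}^{k'} X_j$. The binary relative entropy is $\mathrm{kl}(x,y) = x\ln(x/y) + (1-x)\ln((1-x)/(1-y))$ (with the usual conventions $0\ln 0 = 0$). For $u \ge 1$ let $h(u) = u - \ln(u)$ and let $h^{-1}$ be its inverse (on $[1,\infty)$). For $x \ge 0$ let $\tilde h(x) = e^{1/h^{-1}(x)} h^{-1}(x)$ if $x \ge h^{-1}(1/\ln(3/2))$ and $\tilde h(x) = \frac{3}{2}(x - \ln(\ln(3/2)))$ otherwise. Define $\mathcal{T}(x) = 2\tilde h\left(\frac{h^{-1}(1+x) + \ln(2\zeta(2))}{2}\right)$, where $\zeta(2) = \pi^2/6$. The infimum of the empty set is $+\infty$. *)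

theory Defs
  imports "HOL-Probability.Probability"
begin

definition emp_mean :: "(nat \<Rightarrow> 'a \<Rightarrow> real) \<Rightarrow> nat \<Rightarrow> nat \<Rightarrow> 'a \<Rightarrow> real" where
  "emp_mean X k k' \<omega> = (\<Sum>j = k..k'. X j \<omega>) / (real k' - real k + 1)"

text \<open>Binary relative entropy with the convention 0 ln 0 = 0.\<close>
definition kl :: "real \<Rightarrow> real \<Rightarrow> real" where
  "kl x y = (if x = 0 then 0 else x * ln (x / y))
          + (if x = 1 then 0 else (1 - x) * ln ((1 - x) / (1 - y)))"

definition h_fun :: "real \<Rightarrow> real" where
  "h_fun u = u - ln u"

definition h_inv :: "real \<Rightarrow> real" where
  "h_inv x = (THE u. u \<ge> 1 \<and> h_fun u = x)"

definition h_tilde :: "real \<Rightarrow> real" where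
  "h_tilde x = (if x \<ge> h_inv (1 / ln (3/2)) then exp (1 / h_inv x) * h_inv x
                else 3/2 * (x - ln (ln (3/2))))"

definition calT :: "real \<Rightarrow> real" where
  "calT x = 2 * h_tilde ((h_inv (1 + x) + ln (2 * (pi^2 / 6))) / 2)"

definition beta_thr :: "nat \<Rightarrow> real \<Rightarrow> real" where
  "beta_thr n \<delta> = 2 * calT (ln (3 * real n * sqrt (real n) / \<delta>) / 2) + 6 * ln (1 + ln (real n))"

text \<open>GLR statistic: sup over 1 \<le> s < n (a finite set; for n = 1 the set is empty).\<close>
definition glr_stat :: "(nat \<Rightarrow> 'a \<Rightarrow> real) \<Rightarrow> nat \<Rightarrow> 'a \<Rightarrow> real" where
  "glr_stat X n \<omega> = Max ((\<lambda>s. real s * kl (emp_mean X 1 s \<omega>) (emp_mean X 1 n \<omega>)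
        + real (n - s) * kl (emp_mean X (s+1) n \<omega>) (emp_mean X 1 n \<omega>)) ` {1..<n})"

text \<open>GLR change-point detector; the infimum of the empty set is \<infinity>.
  The supremum over the empty set (n = 1) is -\<infinity>, so n = 1 never triggers.\<close>
definition glr_tau :: "(nat \<Rightarrow> 'a \<Rightarrow> real) \<Rightarrow> real \<Rightarrow> 'a \<Rightarrow> enat" where
  "glr_tau X \<delta> \<omega> = (INF n \<in> {n. n \<ge> 2 \<and> glr_stat X n \<omega> \<ge> beta_thr n \<delta>}. enat n)"

end

theory Submission
  imports Defs "HOL-Real_Asymp.Real_Asymp"
begin

text \<open>A false alarm at time \<open>n\<close> with change point \<open>s\<close> forces
  \<open>s kl(\<mu>\<^sub>1, \<mu>\<^sub>0) + (n - s) kl(\<mu>\<^sub>2, \<mu>\<^sub>0) \<ge> \<beta>(n, \<delta>)\<close> for the empirical means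
  \<open>\<mu>\<^sub>1, \<mu>\<^sub>2\<close> of the two segments, because the pooled mean minimises the two-sample divergence.
  Discretising the length \<open>n - s\<close> on a dyadic scale \<open>m\<close> and the way the threshold is shared between
  the two segments yields finitely many Bernoulli likelihood-ratio products, one of which must then
  exceed \<open>e\<^sup>c\<close> by time \<open>s + 2^(m+1)\<close>, where \<open>c\<close> is slightly below \<open>\<beta>\<close>.
  Each product has independent factors of mean at most \<open>1\<close>, so by Ville's inequality it crosses
  \<open>e\<^sup>c\<close> with probability at most \<open>e\<^sup>-\<^sup>c\<close>; the definition of \<open>\<beta>\<close> makes these bounds summable
  over the grid, over \<open>m\<close> and over \<open>s\<close> with total at most \<open>\<delta>\<close>.\<close>

section \<open>A tractable lower bound for the threshold\<close>

lemma ln_less_minus_one: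
  assumes "1 < x" shows "ln x < x - (1::real)"
proof -
  have "1 < sqrt x" using assms by simp
  have "ln x = 2 * ln (sqrt x)" using assms by (simp add: ln_sqrt)
  also have "\<dots> \<le> 2 * (sqrt x - 1)" using ln_le_minus_one[of "sqrt x"] \<open>1 < sqrt x\<close> by simp
  also have "\<dots> < x - 1"
  proof -
    have "0 < (sqrt x - 1)\<^sup>2" using \<open>1 < sqrt x\<close> by simp
    thus ?thesis using assms by (simp add: power2_eq_square algebra_simps)
  qed
  finally show ?thesis .
qed

lemma h_fun_strict_mono:
  assumes "1 \<le> u" "u < v" shows "h_fun u < h_fun v"
proof -
  have "ln v - ln u = ln (v / u)" using assms by (simp add: ln_div)
  also have "\<dots> < v / u - 1" using assms by (intro ln_less_minus_one) simp
  also have "\<dots> = (v - u) / u" using assms by (simp add: field_simps)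
  also have "\<dots> \<le> v - u" using assms by (simp add: divide_le_eq)
  finally show ?thesis unfolding h_fun_def by simp
qed

lemma h_fun_surj:
  assumes "1 \<le> x" shows "\<exists>u\<ge>1. h_fun u = x"
proof -
  have "ln (2 * x) \<le> x"
    using ln_le_minus_one[of x] ln_2_less_1 assms by (simp add: ln_mult)
  hence "h_fun 1 \<le> x" "x \<le> h_fun (2 * x)" using assms unfolding h_fun_def by simp_all
  moreover have "continuous_on {1..2 * x} h_fun"
    unfolding h_fun_def by (intro continuous_intros) auto
  ultimately show ?thesis using IVT'[of h_fun 1 x "2 * x"] assms by force
qed

lemma h_inv:
  assumes "1 \<le> x" shows "1 \<le> h_inv x" "h_fun (h_inv x) = x"
proof -
  have "\<exists>!u. 1 \<le> u \<and> h_fun u = x"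
    using h_fun_surj[OF assms] h_fun_strict_mono by (metis linorder_neqE_linordered_idom less_irrefl)
  from theI'[OF this] show "1 \<le> h_inv x" "h_fun (h_inv x) = x" unfolding h_inv_def by auto
qed

lemma h_inv_ge:
  assumes "1 \<le> x" shows "x + ln x \<le> h_inv x"
proof -
  have "0 \<le> ln (h_inv x)" using h_inv[OF assms] by simp
  hence "x \<le> h_inv x" using h_inv[OF assms] unfolding h_fun_def by linarith
  hence "ln x \<le> ln (h_inv x)" using assms by simp
  thus ?thesis using h_inv[OF assms] unfolding h_fun_def by simp
qed

lemma ln_le_of_le_exp: "0 < a \<Longrightarrow> a \<le> exp b \<Longrightarrow> ln a \<le> (b::real)"
  by (metis exp_le_cancel_iff exp_ln)

lemma ln_2_le: "ln (2::real) \<le> 3/4"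
proof -
  have "(2::real) \<le> (1 + (3/4) / real 8) ^ 8" by (simp add: power_divide)
  also have "\<dots> \<le> exp (3/4)" by (rule exp_ge_one_plus_x_over_n_power_n) auto
  finally show ?thesis by (intro ln_le_of_le_exp) auto
qed

lemma ln_2_ge: "1/2 \<le> ln (2::real)"
  using exp_half_le2 by (subst ln_ge_iff) auto

lemma h_tilde_ge:
  assumes "1 \<le> z" shows "z + ln z + 1 \<le> h_tilde z"
proof (cases "h_inv (1 / ln (3/2)) \<le> z")
  case True
  define v where "v = h_inv z"
  have v: "1 \<le> v" "z + ln z \<le> v" using h_inv[OF assms] h_inv_ge[OF assms] unfolding v_def by auto
  have "(1 + 1 / v) * v \<le> exp (1 / v) * v"
    using exp_ge_add_one_self[of "1 / v"] v by (intro mult_right_mono) auto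
  moreover have "(1 + 1 / v) * v = v + 1" using v by (simp add: field_simps)
  ultimately have "v + 1 \<le> exp (1 / v) * v" by simp
  thus ?thesis using True v unfolding h_tilde_def v_def by simp
next
  case False
  have "ln (3/2::real) \<le> 1/2"
    using exp_ge_add_one_self[of "1/2::real"] by (intro ln_le_of_le_exp) auto
  hence "ln (ln (3/2::real)) \<le> ln (1/2)" by (subst ln_le_cancel_iff) auto
  hence "ln (ln (3/2::real)) \<le> - ln 2" by (simp add: ln_div)
  moreover have "ln z \<le> ln 2 + z/2 - 1"
    using ln_le_minus_one[of "z/2"] assms by (simp add: ln_div)
  moreover have "h_tilde z = 3/2 * z - 3/2 * ln (ln (3/2))"
    using False unfolding h_tilde_def by simp
  ultimately show ?thesis using ln_2_le ln_2_ge by linarith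
qed

lemma calT_ge:
  assumes "0 \<le> x" shows "4 + x + ln (1 + x) + 2 * ln (1 + x/2) \<le> calT x"
proof -
  define u where "u = h_inv (1 + x)"
  define c where "c = ln (2 * (pi\<^sup>2 / 6))"
  define z where "z = (u + c) / 2"
  have u: "1 + x + ln (1 + x) \<le> u" using h_inv_ge[of "1 + x"] assms unfolding u_def by simp
  have "exp 1 \<le> 2 * (pi\<^sup>2 / 6)"
    using exp_le pi_gt3 power_strict_mono[of 3 pi 2] by simp
  hence c: "1 \<le> c" unfolding c_def by (simp add: ln_ge_iff)
  have "0 \<le> ln (1 + x)" using assms by simp
  hence "2 + x \<le> u + c" using u c by linarith
  hence "1 + x/2 \<le> z" unfolding z_def by simp
  hence "1 \<le> z" "ln (1 + x/2) \<le> ln z" using assms by auto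
  moreover have "calT x = 2 * h_tilde z" unfolding calT_def z_def u_def c_def ..
  moreover have "2 * z = u + c" unfolding z_def by simp
  ultimately show ?thesis using h_tilde_ge[of z] u c by linarith
qed

definition thr_log :: "real \<Rightarrow> real \<Rightarrow> real" where
  "thr_log \<delta> x = ln (3 * x * sqrt x / \<delta>)"

definition thr_lower :: "real \<Rightarrow> real \<Rightarrow> real" where
  "thr_lower \<delta> x = thr_log \<delta> x + 8 + 2 * ln (1 + thr_log \<delta> x / 2)
     + 4 * ln (1 + thr_log \<delta> x / 4) + 6 * ln (1 + ln x)"

lemma thr_log_ge_1:
  assumes "0 < \<delta>" "\<delta> \<le> 1" "1 \<le> x" shows "1 \<le> thr_log \<delta> x"
proof -
  have "3 \<le> 3 * x * sqrt x" using assms mult_mono[of 1 x 1 "sqrt x"] by simp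
  also have "\<dots> \<le> 3 * x * sqrt x / \<delta>" using assms calculation by (simp add: le_divide_eq)
  finally have "ln 3 \<le> thr_log \<delta> x" unfolding thr_log_def by simp
  moreover have "1 \<le> ln (3::real)" using exp_le by (simp add: ln_ge_iff)
  ultimately show ?thesis by simp
qed

lemma beta_thr_ge_thr_lower:
  assumes "0 < \<delta>" "\<delta> \<le> 1" "1 \<le> n" shows "thr_lower \<delta> (real n) \<le> beta_thr n \<delta>"
proof -
  define L where "L = thr_log \<delta> n"
  have "4 + L/2 + ln (1 + L/2) + 2 * ln (1 + L/4) \<le> calT (L/2)"
    using calT_ge[of "L/2"] thr_log_ge_1[of \<delta> n] assms unfolding L_def by simp
  moreover have "beta_thr n \<delta> = 2 * calT (L/2) + 6 * ln (1 + ln n)"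
    unfolding beta_thr_def L_def thr_log_def ..
  ultimately show ?thesis unfolding thr_lower_def L_def[symmetric] by linarith
qed

lemma thr_lower_ge_9:
  assumes "0 < \<delta>" "\<delta> \<le> 1" "1 \<le> x" shows "9 \<le> thr_lower \<delta> x"
proof -
  have "1 \<le> thr_log \<delta> x" using thr_log_ge_1[OF assms] .
  moreover have "0 \<le> ln (1 + thr_log \<delta> x / 2)" "0 \<le> ln (1 + thr_log \<delta> x / 4)" "0 \<le> ln (1 + ln x)"
    using calculation assms by auto
  ultimately show ?thesis unfolding thr_lower_def by linarith
qed

lemma thr_lower_mono:
  assumes "0 < \<delta>" "\<delta> \<le> 1" "1 \<le> x" "x \<le> x'" shows "thr_lower \<delta> x \<le> thr_lower \<delta> x'"
proof -
  have "3 * x * sqrt x \<le> 3 * x' * sqrt x'" using assms by (intro mult_mono) auto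
  hence L: "thr_log \<delta> x \<le> thr_log \<delta> x'"
    unfolding thr_log_def using assms by (simp add: divide_right_mono)
  have L1: "1 \<le> thr_log \<delta> x" using thr_log_ge_1[OF assms(1-3)] .
  have "ln (1 + thr_log \<delta> x / 2) \<le> ln (1 + thr_log \<delta> x' / 2)"
    "ln (1 + thr_log \<delta> x / 4) \<le> ln (1 + thr_log \<delta> x' / 4)"
    using L L1 by simp_all
  moreover have "ln (1 + ln x) \<le> ln (1 + ln x')"
  proof -
    have "ln x \<le> ln x'" "0 \<le> ln x" using assms by auto
    thus ?thesis by simp
  qed
  ultimately show ?thesis using L unfolding thr_lower_def by linarith
qed

lemma linear_le_cubic:
  fixes D E :: real
  assumes "5/4 \<le> D" "3/2 \<le> E" shows "12 * D + 6 * E - 8 \<le> 7 * (2 * D - 1) * D\<^sup>2 * E"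
proof -
  define P where "P = D\<^sup>2 * E"
  have "15/8 \<le> D * E" using assms mult_mono[of "5/4" D "3/2" E] by simp
  hence "12 * D \<le> 32/5 * P"
    using assms mult_left_mono[of "15/8" "D * E" "32/5 * D"] unfolding P_def by (simp add: power2_eq_square)
  moreover have "(5/4)\<^sup>2 \<le> D\<^sup>2" using assms by (intro power_mono) auto
  hence "6 * E \<le> 96/25 * P"
    using assms mult_left_mono[of "25/16" "D\<^sup>2" "96/25 * E"] unfolding P_def by (simp add: power2_eq_square)
  moreover have "0 \<le> P" using assms unfolding P_def by simp
  moreover from this have "3/2 * P \<le> (2 * D - 1) * P" using assms by (intro mult_right_mono) auto
  ultimately have "12 * D + 6 * E - 8 \<le> 7 * ((2 * D - 1) * P)" by linarith
  thus ?thesis unfolding P_def by (simp only: mult.assoc)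
qed

lemma thr_lower_exp_bound:
  assumes "0 < \<delta>" "\<delta> \<le> 1" "2 \<le> x"
  defines "W \<equiv> thr_lower \<delta> x"
  shows "(W + 1) * (W + 2) * exp (- W) \<le> 49/3 * exp (-8) * \<delta> / (x * sqrt x * (1 + ln x)^4)"
proof -
  define L where "L = thr_log \<delta> x"
  define A where "A = 1 + L/2"
  define D where "D = 1 + L/4"
  define E where "E = 1 + ln x"
  have "1 \<le> L" unfolding L_def using thr_log_ge_1 assms by simp
  hence A: "3/2 \<le> A" and D: "5/4 \<le> D" unfolding A_def D_def by simp_all
  have "ln 2 \<le> ln x" using assms by simp
  hence E: "3/2 \<le> E" using ln_2_ge unfolding E_def by linarith
  have W: "W = L + 8 + 2 * ln A + 4 * ln D + 6 * ln E"
    unfolding W_def thr_lower_def L_def A_def D_def E_def ..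
  have "W + 2 \<le> 12 * D + 6 * E - 8"
    using ln_le_minus_one[of A] ln_le_minus_one[of D] ln_le_minus_one[of E] A D E
    unfolding W A_def D_def by simp
  also have "\<dots> \<le> 7 * A * D\<^sup>2 * E" using linear_le_cubic[OF D E] unfolding A_def D_def by simp
  finally have W2: "W + 2 \<le> 7 * A * D\<^sup>2 * E" .
  have "0 \<le> W" unfolding W_def using thr_lower_ge_9 assms by (smt (verit))
  hence "(W + 1) * (W + 2) \<le> (7 * A * D\<^sup>2 * E) * (7 * A * D\<^sup>2 * E)"
    using W2 A E by (intro mult_mono) auto
  hence "(W + 1) * (W + 2) * exp (- W) \<le> 49 * A\<^sup>2 * D^4 * E\<^sup>2 * exp (- W)"
    by (simp add: power2_eq_square power4_eq_xxxx ac_simps)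
  also have "\<dots> = 49/3 * exp (-8) * \<delta> / (x * sqrt x * E^4)"
  proof -
    have "exp (- W) = exp (- L) * exp (-8) / (exp (ln A) ^ 2 * exp (ln D) ^ 4 * exp (ln E) ^ 6)"
      unfolding W by (simp add: exp_add exp_diff exp_minus exp_of_nat_mult[symmetric] field_simps)
    moreover have "exp (- L) = \<delta> / (3 * x * sqrt x)"
      unfolding L_def thr_log_def using assms(1,3) by (simp add: exp_minus)
    ultimately show ?thesis
      using A D E assms(3) by (simp add: field_simps power2_eq_square power4_eq_xxxx eval_nat_numeral)
  qed
  finally show ?thesis unfolding E_def .
qed

lemma exp_6_ge: "261.5 \<le> exp (6::real)"
proof -
  have "(261.5::real) \<le> (1 + 6 / real 40) ^ 40" by (simp add: power_divide)
  also have "\<dots> \<le> exp 6" by (rule exp_ge_one_plus_x_over_n_power_n) auto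
  finally show ?thesis .
qed

lemma dyadic_sum_ge_2:
  assumes "1 \<le> s" shows "2 \<le> real s + 2 ^ m"
proof -
  have "(1::real) \<le> real s" "(1::real) \<le> 2 ^ m" using assms by auto
  thus ?thesis by linarith
qed

lemma ln_dyadic_pow4_ge:
  assumes "1 \<le> s" shows "9/4 * (1 + real m / 2)\<^sup>2 \<le> (1 + ln (real s + 2 ^ m))^4"
proof -
  define E where "E = 1 + ln (real s + 2 ^ m)"
  have "real m * (1/2) \<le> real m * ln 2" using ln_2_ge by (intro mult_left_mono) auto
  also have "\<dots> = ln (2 ^ m)" by (simp add: ln_realpow)
  also have "\<dots> \<le> ln (real s + 2 ^ m)" using dyadic_sum_ge_2[OF assms, of m] by (intro ln_mono) auto
  finally have "1 + real m / 2 \<le> E" unfolding E_def by simp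
  hence "(1 + real m / 2)\<^sup>2 \<le> E\<^sup>2" by (intro power_mono) auto
  moreover have "(3/2)\<^sup>2 \<le> E\<^sup>2"
  proof -
    have "ln 2 \<le> ln (real s + 2 ^ m)"
      using dyadic_sum_ge_2[OF assms, of m] by (intro ln_mono) auto
    thus ?thesis using ln_2_ge unfolding E_def by (intro power_mono) auto
  qed
  ultimately have "(3/2)\<^sup>2 * (1 + real m / 2)\<^sup>2 \<le> E\<^sup>2 * E\<^sup>2" by (intro mult_mono) auto
  thus ?thesis unfolding E_def[symmetric] by (simp add: power4_eq_xxxx power2_eq_square mult.assoc)
qed

text \<open>After a change point \<open>s\<close>, a second segment of length in \<open>[2^m, 2^(m+1))\<close> faces a threshold of at
  least \<open>grid_thr \<delta> s m\<close>.  It is covered by a grid of \<open>grid_size \<delta> s m\<close> alternatives, each of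
  which must then reach the level \<open>grid_level \<delta> s m\<close>, slightly below the threshold.\<close>

definition grid_thr :: "real \<Rightarrow> nat \<Rightarrow> nat \<Rightarrow> real" where
  "grid_thr \<delta> s m = thr_lower \<delta> (real s + 2 ^ m)"

definition grid_size :: "real \<Rightarrow> nat \<Rightarrow> nat \<Rightarrow> nat" where
  "grid_size \<delta> s m = nat \<lceil>grid_thr \<delta> s m\<rceil>"

definition grid_level :: "real \<Rightarrow> nat \<Rightarrow> nat \<Rightarrow> real" where
  "grid_level \<delta> s m =
     (grid_thr \<delta> s m - 1) * real (grid_size \<delta> s m) / (real (grid_size \<delta> s m) + 1)"

lemma grid_thr_ge_9:
  assumes "0 < \<delta>" "\<delta> \<le> 1" "1 \<le> s" shows "9 \<le> grid_thr \<delta> s m"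
  using thr_lower_ge_9[OF assms(1,2)] dyadic_sum_ge_2[OF assms(3), of m] unfolding grid_thr_def by simp

lemma grid_size_bounds:
  assumes "0 < \<delta>" "\<delta> \<le> 1" "1 \<le> s"
  shows "grid_thr \<delta> s m \<le> grid_size \<delta> s m" "grid_size \<delta> s m \<le> grid_thr \<delta> s m + 1"
  using grid_thr_ge_9[OF assms, of m] unfolding grid_size_def by linarith+

lemma grid_cost_le_exp_grid_thr:
  fixes m :: nat
  assumes "0 < \<delta>" "\<delta> \<le> 1" "1 \<le> s"
  defines "W \<equiv> grid_thr \<delta> s m" and "K \<equiv> real (grid_size \<delta> s m)"
  shows "4 * K * (K + 1) * exp (- grid_level \<delta> s m) \<le> 4 * exp 2 * ((W + 1) * (W + 2) * exp (- W))"
proof -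
  have W9: "9 \<le> W" unfolding W_def using grid_thr_ge_9[OF assms(1-3)] .
  have KW: "W \<le> K" "K \<le> W + 1" unfolding W_def K_def using grid_size_bounds[OF assms(1-3)] by auto
  have "grid_level \<delta> s m = (W - 1) - (W - 1) / (K + 1)"
    unfolding grid_level_def W_def[symmetric] K_def[symmetric] using KW W9 by (simp add: field_simps)
  moreover have "(W - 1) / (K + 1) \<le> 1" using KW W9 by simp
  ultimately have "exp (- grid_level \<delta> s m) \<le> exp 2 * exp (- W)" by (simp add: exp_add[symmetric])
  moreover have "K * (K + 1) \<le> (W + 1) * (W + 2)" using KW W9 by (intro mult_mono) auto
  ultimately have "K * (K + 1) * exp (- grid_level \<delta> s m) \<le> (W + 1) * (W + 2) * (exp 2 * exp (- W))"
    using KW W9 by (intro mult_mono) auto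
  also have "\<dots> = exp 2 * ((W + 1) * (W + 2) * exp (- W))" by simp
  finally show ?thesis using mult_left_mono[of _ _ 4] by (simp only: mult.assoc)
qed

lemma grid_cost_le:
  assumes "0 < \<delta>" "\<delta> \<le> 1" "1 \<le> s"
  shows "4 * real (grid_size \<delta> s m) * (real (grid_size \<delta> s m) + 1) * exp (- grid_level \<delta> s m)
           \<le> \<delta> / (9 * (real s * sqrt (real s)) * (1 + real m / 2)\<^sup>2)"
proof -
  define x where "x = real s + 2 ^ m"
  have x2: "2 \<le> x" unfolding x_def using dyadic_sum_ge_2[OF assms(3), of m] .
  have "4 * real (grid_size \<delta> s m) * (real (grid_size \<delta> s m) + 1) * exp (- grid_level \<delta> s m)
          \<le> 4 * exp 2 * (49/3 * exp (-8) * \<delta> / (x * sqrt x * (1 + ln x)^4))"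
    using grid_cost_le_exp_grid_thr[OF assms, of m] thr_lower_exp_bound[OF assms(1,2) x2]
    unfolding grid_thr_def x_def by (smt (verit) exp_gt_zero mult_left_mono)
  also have "\<dots> = 196/3 * exp (-6) * \<delta> / (x * sqrt x * (1 + ln x)^4)"
    by (simp add: mult_exp_exp)
  also have "\<dots> \<le> 196/3 * exp (-6) * \<delta> / (real s * sqrt (real s) * (9/4 * (1 + real m / 2)\<^sup>2))"
  proof (rule divide_left_mono)
    have "real s * sqrt (real s) \<le> x * sqrt x" unfolding x_def by (intro mult_mono) auto
    thus "real s * sqrt (real s) * (9/4 * (1 + real m / 2)\<^sup>2) \<le> x * sqrt x * (1 + ln x)^4"
      using ln_dyadic_pow4_ge[OF assms(3), of m] unfolding x_def by (intro mult_mono) auto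
    have "0 < 1 + ln x" using x2 ln_ge_zero[of x] by linarith
    thus "0 < x * sqrt x * (1 + ln x) ^ 4 * (real s * sqrt (real s) * (9/4 * (1 + real m / 2)\<^sup>2))"
      using assms x2 by (intro mult_pos_pos) auto
  qed (use assms in auto)
  also have "\<dots> \<le> \<delta> / (9 * (real s * sqrt (real s)) * (1 + real m / 2)\<^sup>2)"
  proof -
    have "exp (-6::real) \<le> 1 / 261.5" using exp_6_ge by (simp add: exp_minus field_simps)
    hence "196/3 * exp (-6::real) / (9/4) \<le> 1/9" by simp
    thus ?thesis using assms by (simp add: field_simps)
  qed
  finally show ?thesis .
qed

section \<open>Bernoulli relative entropy and log-likelihood ratios\<close>

definition bernoulli_llr :: "real \<Rightarrow> real \<Rightarrow> real \<Rightarrow> real" where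
  "bernoulli_llr y \<theta> x = x * ln (\<theta> / y) + (1 - x) * ln ((1 - \<theta>) / (1 - y))"

lemma bernoulli_llr_affine:
  "bernoulli_llr y \<theta> x = ln ((1 - \<theta>) / (1 - y)) + x * (ln (\<theta> / y) - ln ((1 - \<theta>) / (1 - y)))"
  unfolding bernoulli_llr_def by (simp add: algebra_simps)

lemma bernoulli_llr_one_minus: "bernoulli_llr (1 - y) (1 - \<theta>) (1 - x) = bernoulli_llr y \<theta> x"
  unfolding bernoulli_llr_def by simp

lemma bernoulli_llr_same [simp]: "bernoulli_llr y y x = 0"
  unfolding bernoulli_llr_def by simp

lemma kl_one_minus: "kl (1 - x) (1 - y) = kl x y"
  unfolding kl_def by auto

lemma kl_same: "0 \<le> x \<Longrightarrow> x \<le> 1 \<Longrightarrow> kl x x = 0"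
  unfolding kl_def by auto

lemma kl_interior: "0 < x \<Longrightarrow> x < 1 \<Longrightarrow> kl x y = x * ln (x / y) + (1 - x) * ln ((1 - x) / (1 - y))"
  unfolding kl_def by auto

lemma kl_nonneg:
  assumes "0 \<le> x" "x \<le> 1" "0 < y" "y < 1" shows "0 \<le> kl x y"
proof -
  have ln_ge: "1 - 1 / t \<le> ln t" if "0 < t" for t :: real
    using ln_le_minus_one[of "1 / t"] that by (simp add: ln_div)
  have "x - y \<le> (if x = 0 then 0 else x * ln (x / y))"
  proof (cases "x = 0")
    case False
    have "x * (1 - y / x) \<le> x * ln (x / y)"
      using ln_ge[of "x / y"] assms False by (intro mult_left_mono) (auto simp: field_simps)
    moreover have "x * (1 - y / x) = x - y" using False by (simp add: field_simps)
    ultimately show ?thesis using False by simp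
  qed (use assms in auto)
  moreover have "y - x \<le> (if x = 1 then 0 else (1 - x) * ln ((1 - x) / (1 - y)))"
  proof (cases "x = 1")
    case False
    have "(1 - x) * (1 - (1 - y) / (1 - x)) \<le> (1 - x) * ln ((1 - x) / (1 - y))"
      using ln_ge[of "(1 - x) / (1 - y)"] assms False by (intro mult_left_mono) (auto simp: field_simps)
    moreover have "(1 - x) * (1 - (1 - y) / (1 - x)) = y - x" using False by (simp add: field_simps)
    ultimately show ?thesis using False by simp
  qed (use assms in auto)
  ultimately show ?thesis unfolding kl_def by linarith
qed

lemma kl_eq_bernoulli_llr_add_kl:
  assumes "0 \<le> x" "x \<le> 1" "0 < y" "y < 1" "0 < \<theta>" "\<theta> < 1"
  shows "kl x y = bernoulli_llr y \<theta> x + kl x \<theta>"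
  using assms unfolding kl_def bernoulli_llr_def by (auto simp: ln_div algebra_simps)

lemma bernoulli_llr_self:
  assumes "0 < y" "y < 1" "0 < \<theta>" "\<theta> < 1" shows "bernoulli_llr y \<theta> \<theta> = kl \<theta> y"
  using kl_eq_bernoulli_llr_add_kl[of \<theta> y \<theta>] kl_same[of \<theta>] assms by simp

lemma bernoulli_llr_mono:
  assumes "0 < y" "y \<le> \<theta>" "\<theta> < 1" "x \<le> x'" shows "bernoulli_llr y \<theta> x \<le> bernoulli_llr y \<theta> x'"
proof -
  have "0 \<le> ln (\<theta> / y)" "ln ((1 - \<theta>) / (1 - y)) \<le> 0" using assms by auto
  hence "0 \<le> ln (\<theta> / y) - ln ((1 - \<theta>) / (1 - y))" by linarith
  thus ?thesis unfolding bernoulli_llr_affine using assms(4) by (intro add_left_mono mult_right_mono)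
qed

lemma kl_tendsto_at_left_1:
  assumes "0 < y" "y < 1" shows "((\<lambda>x. kl x y) \<longlongrightarrow> kl 1 y) (at_left 1)"
proof -
  have lim: "((\<lambda>x::real. (1 - x) * ln (1 - x)) \<longlongrightarrow> 0) (at_left 1)" by real_asymp
  have "((\<lambda>x. x * ln (x / y) + ((1 - x) * ln (1 - x) - (1 - x) * ln (1 - y))) \<longlongrightarrow>
          1 * ln (1 / y) + (0 - (1 - 1) * ln (1 - y))) (at_left 1)"
    using assms by (intro tendsto_intros lim) auto
  hence tendsto: "((\<lambda>x. x * ln (x / y) + ((1 - x) * ln (1 - x) - (1 - x) * ln (1 - y))) \<longlongrightarrow> kl 1 y) (at_left 1)"
    unfolding kl_def by simp
  have "eventually (\<lambda>x. x \<in> {0<..<1}) (at_left (1::real))"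
    by (rule eventually_at_left_real) simp
  hence "eventually (\<lambda>x. x * ln (x / y) + ((1 - x) * ln (1 - x) - (1 - x) * ln (1 - y)) = kl x y) (at_left 1)"
    by eventually_elim (use assms in \<open>auto simp: kl_interior ln_div algebra_simps\<close>)
  thus ?thesis using tendsto by (rule Lim_transform_eventually[rotated])
qed

lemma kl_level_above:
  assumes "0 < y" "y \<le> x" "x \<le> 1" "0 < q" "q < kl x y"
  obtains \<theta> where "y < \<theta>" "\<theta> < 1" "kl \<theta> y = q"
proof -
  have "y < 1" using assms kl_same[of y] by (cases "y = 1") auto
  have "\<exists>x'\<in>{y..<1}. q < kl x' y"
  proof (cases "x < 1")
    case False
    have "eventually (\<lambda>x'. q < kl x' y \<and> x' \<in> {y<..<1}) (at_left 1)"
      using order_tendstoD(1)[OF kl_tendsto_at_left_1[OF assms(1) \<open>y < 1\<close>]] assms False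
        eventually_at_left_real[OF \<open>y < 1\<close>]
      by (auto intro: eventually_conj)
    from eventually_happens[OF this] show ?thesis by (auto simp: trivial_limit_at_left_real)
  qed (use assms in auto)
  then obtain x' where x': "y \<le> x'" "x' < 1" "q < kl x' y" by auto
  have "continuous_on {y..x'} (\<lambda>t. kl t y)"
  proof -
    have "continuous_on {y..x'} (\<lambda>t. t * ln (t / y) + (1 - t) * ln ((1 - t) / (1 - y)))"
      using assms x' by (intro continuous_intros) auto
    thus ?thesis by (rule continuous_on_cong[THEN iffD1, rotated 2]) (use assms x' in \<open>auto simp: kl_interior\<close>)
  qed
  moreover have "kl y y \<le> q" using kl_same[of y] assms \<open>y < 1\<close> by simp
  ultimately obtain \<theta> where "y \<le> \<theta>" "\<theta> \<le> x'" "kl \<theta> y = q"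
    using IVT'[of "\<lambda>t. kl t y" y q x'] x' by auto
  moreover have "\<theta> \<noteq> y" using calculation kl_same[of y] assms \<open>y < 1\<close> by auto
  ultimately have "y < \<theta>" "\<theta> < 1" "kl \<theta> y = q" using x' by auto
  thus ?thesis by (rule that)
qed

lemma bernoulli_llr_kl_level_ge:
  assumes "0 < y" "y < \<theta>" "\<theta> < 1" "y \<le> x" "x \<le> 1" "kl \<theta> y < kl x y"
  shows "kl \<theta> y \<le> bernoulli_llr y \<theta> x"
proof -
  have "\<theta> \<le> x"
  proof (rule ccontr)
    assume "\<not> \<theta> \<le> x"
    hence x: "0 < x" "x < 1" "x < \<theta>" using assms by auto
    have "kl x y = bernoulli_llr y x x" using bernoulli_llr_self[of y x] assms x by simp
    also have "\<dots> \<le> bernoulli_llr y x \<theta>" using bernoulli_llr_mono[of y x x \<theta>] assms x by simp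
    also have "\<dots> \<le> kl \<theta> y"
      using kl_eq_bernoulli_llr_add_kl[of \<theta> y x] kl_nonneg[of \<theta> x] assms x by simp
    finally show False using assms by simp
  qed
  hence "bernoulli_llr y \<theta> \<theta> \<le> bernoulli_llr y \<theta> x" using bernoulli_llr_mono[of y \<theta> \<theta> x] assms by simp
  thus ?thesis using bernoulli_llr_self[of y \<theta>] assms by simp
qed

lemma kl_tilt_above_exists:
  assumes "0 < y" "y < 1"
  shows "\<exists>\<theta>. 0 < \<theta> \<and> \<theta> < 1 \<and>
           (\<forall>x\<in>{y..1}. q \<le> 0 \<or> q < kl x y \<longrightarrow> q \<le> bernoulli_llr y \<theta> x)"
proof (cases "0 < q \<and> (\<exists>x\<in>{y..1}. q < kl x y)")
  case True
  then obtain x0 where "x0 \<in> {y..1}" "q < kl x0 y" by blast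
  then obtain \<theta> where \<theta>: "y < \<theta>" "\<theta> < 1" "kl \<theta> y = q"
    using kl_level_above[of y x0 q] assms True by auto
  have "q \<le> bernoulli_llr y \<theta> x" if "x \<in> {y..1}" "q < kl x y" for x
    using bernoulli_llr_kl_level_ge[of y \<theta> x] \<theta> that assms by simp
  thus ?thesis using True \<theta> assms by (intro exI[of _ \<theta>]) auto
qed (use assms in \<open>intro exI[of _ y]; auto\<close>)

definition kl_tilt :: "real \<Rightarrow> real \<Rightarrow> bool \<Rightarrow> real" where
  "kl_tilt y q up = (SOME \<theta>. 0 < \<theta> \<and> \<theta> < 1 \<and>
     (\<forall>x\<in>{0..1}. (y \<le> x \<longleftrightarrow> up) \<longrightarrow> q \<le> 0 \<or> q < kl x y \<longrightarrow> q \<le> bernoulli_llr y \<theta> x))"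

lemma kl_tilt_exists:
  assumes "0 < y" "y < 1"
  shows "\<exists>\<theta>. 0 < \<theta> \<and> \<theta> < 1 \<and>
           (\<forall>x\<in>{0..1}. (y \<le> x \<longleftrightarrow> up) \<longrightarrow> q \<le> 0 \<or> q < kl x y \<longrightarrow> q \<le> bernoulli_llr y \<theta> x)"
proof (cases up)
  case True
  thus ?thesis using kl_tilt_above_exists[OF assms, of q] by auto
next
  case False
  obtain \<theta> where \<theta>: "0 < \<theta>" "\<theta> < 1"
    and ge: "\<forall>x\<in>{1 - y..1}. q \<le> 0 \<or> q < kl x (1 - y) \<longrightarrow> q \<le> bernoulli_llr (1 - y) \<theta> x"
    using kl_tilt_above_exists[of "1 - y" q] assms by auto
  have "q \<le> bernoulli_llr y (1 - \<theta>) x" if "x \<in> {0..1}" "x < y" "q \<le> 0 \<or> q < kl x y" for x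
    using ge[rule_format, of "1 - x"] that kl_one_minus[of x y] bernoulli_llr_one_minus[of y "1 - \<theta>" x] by simp
  thus ?thesis using False \<theta> by (intro exI[of _ "1 - \<theta>"]) auto
qed

lemma kl_tilt_bounds:
  assumes "0 < y" "y < 1" shows "0 < kl_tilt y q up" "kl_tilt y q up < 1"
  using someI_ex[OF kl_tilt_exists[OF assms, of up q]] unfolding kl_tilt_def by auto

lemma bernoulli_llr_kl_tilt_ge:
  assumes "0 < y" "y < 1" "0 \<le> x" "x \<le> 1" "q \<le> 0 \<or> q < kl x y"
  shows "q \<le> bernoulli_llr y (kl_tilt y q (y \<le> x)) x"
  using someI_ex[OF kl_tilt_exists[OF assms(1,2), of "y \<le> x" q]] assms unfolding kl_tilt_def by auto

lemma bernoulli_llr_weighted: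
  assumes "0 < s + r"
  shows "s * bernoulli_llr y \<theta> a + r * bernoulli_llr y \<theta> b
           = (s + r) * bernoulli_llr y \<theta> ((s * a + r * b) / (s + r))"
  using assms unfolding bernoulli_llr_affine by (simp add: field_simps)

lemma sum_bernoulli_llr:
  assumes "finite A" "A \<noteq> {}"
  shows "(\<Sum>t\<in>A. bernoulli_llr y \<theta> (x t)) = card A * bernoulli_llr y \<theta> ((\<Sum>t\<in>A. x t) / card A)"
proof -
  define C where "C = ln ((1 - \<theta>) / (1 - y))"
  define D where "D = ln (\<theta> / y) - ln ((1 - \<theta>) / (1 - y))"
  have "(\<Sum>t\<in>A. bernoulli_llr y \<theta> (x t)) = (\<Sum>t\<in>A. C + x t * D)"
    unfolding bernoulli_llr_affine C_def D_def ..
  also have "\<dots> = card A * C + (\<Sum>t\<in>A. x t) * D" by (simp add: sum.distrib sum_distrib_right)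
  also have "\<dots> = card A * (C + ((\<Sum>t\<in>A. x t) / card A) * D)" using assms by (simp add: field_simps)
  also have "\<dots> = card A * bernoulli_llr y \<theta> ((\<Sum>t\<in>A. x t) / card A)"
    unfolding bernoulli_llr_affine C_def D_def ..
  finally show ?thesis .
qed

lemma weighted_kl_le_at_mean:
  assumes "0 < s" "0 < r" "0 \<le> a" "a \<le> 1" "0 \<le> b" "b \<le> 1" "0 < y" "y < 1"
  defines "\<mu> \<equiv> (s * a + r * b) / (s + r)"
  shows "s * kl a \<mu> + r * kl b \<mu> \<le> s * kl a y + r * kl b y"
proof -
  have "0 \<le> s * a" "s * a \<le> s" "0 \<le> r * b" "r * b \<le> r"
    using assms by (auto intro: mult_right_le_one_le)
  moreover from this have "s * a + r * b \<le> s + r" by linarith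
  ultimately have \<mu>: "0 \<le> \<mu>" "\<mu> \<le> 1" unfolding \<mu>_def using assms(1,2) by auto
  show ?thesis
  proof (cases "0 < \<mu> \<and> \<mu> < 1")
    case True
    have "0 \<le> (s + r) * kl \<mu> y" using kl_nonneg[of \<mu> y] \<mu> assms by simp
    also have "\<dots> = s * bernoulli_llr y \<mu> a + r * bernoulli_llr y \<mu> b"
      using bernoulli_llr_weighted[of s r y \<mu> a b] bernoulli_llr_self[of y \<mu>] True assms
      unfolding \<mu>_def by simp
    finally show ?thesis
      using kl_eq_bernoulli_llr_add_kl[of a y \<mu>] kl_eq_bernoulli_llr_add_kl[of b y \<mu>] True assms
      by (simp add: algebra_simps)
  next
    case False
    have "a = \<mu> \<and> b = \<mu>"
    proof (cases "\<mu> = 0")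
      case True
      hence "s * a + r * b = 0" unfolding \<mu>_def using assms(1,2) by simp
      hence "s * a = 0" "r * b = 0" using \<open>0 \<le> s * a\<close> \<open>0 \<le> r * b\<close> by linarith+
      thus ?thesis using True assms(1,2) by simp
    next
      case False
      hence "\<mu> = 1" using \<mu> \<open>\<not> (0 < \<mu> \<and> \<mu> < 1)\<close> by linarith
      hence "s * a + r * b = s + r" unfolding \<mu>_def using assms(1,2) by simp
      hence "s - s * a = 0" "r - r * b = 0" using \<open>s * a \<le> s\<close> \<open>r * b \<le> r\<close> by linarith+
      hence "s * (1 - a) = 0" "r * (1 - b) = 0" by (simp_all add: algebra_simps)
      thus ?thesis using \<open>\<mu> = 1\<close> assms(1,2) by simp
    qed
    hence "kl a \<mu> = 0" "kl b \<mu> = 0" using kl_same[of \<mu>] \<mu> by auto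
    moreover have "0 \<le> s * kl a y" "0 \<le> r * kl b y" using kl_nonneg assms(1-8) by simp_all
    ultimately show ?thesis by simp
  qed
qed

section \<open>Ville's maximal inequality for products of independent factors\<close>

definition prod_process :: "(nat \<Rightarrow> real \<Rightarrow> real) \<Rightarrow> (nat \<Rightarrow> real) \<Rightarrow> nat \<Rightarrow> real" where
  "prod_process f x n = (\<Prod>t\<in>{1..n}. f t (x t))"

definition crosses :: "(nat \<Rightarrow> real \<Rightarrow> real) \<Rightarrow> real \<Rightarrow> (nat \<Rightarrow> real) \<Rightarrow> nat \<Rightarrow> bool" where
  "crosses f c x n \<longleftrightarrow> (\<exists>k\<le>n. c \<le> prod_process f x k)"

primrec stopped_prod_process :: "(nat \<Rightarrow> real \<Rightarrow> real) \<Rightarrow> real \<Rightarrow> (nat \<Rightarrow> real) \<Rightarrow> nat \<Rightarrow> real" where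
  "stopped_prod_process f c x 0 = 1"
| "stopped_prod_process f c x (Suc n) =
     (if crosses f c x n then stopped_prod_process f c x n else prod_process f x (Suc n))"

lemma prod_process_0 [simp]: "prod_process f x 0 = 1"
  unfolding prod_process_def by simp

lemma prod_process_Suc: "prod_process f x (Suc n) = prod_process f x n * f (Suc n) (x (Suc n))"
  unfolding prod_process_def by (simp add: prod.nat_ivl_Suc' mult.commute)

lemma crosses_Suc: "crosses f c x (Suc n) \<longleftrightarrow> crosses f c x n \<or> c \<le> prod_process f x (Suc n)"
  unfolding crosses_def using le_Suc_eq by auto

lemma stopped_prod_process_not_crosses:
  "\<not> crosses f c x n \<Longrightarrow> stopped_prod_process f c x n = prod_process f x n"
  by (induction n) (auto simp: crosses_Suc)

lemma stopped_prod_process_crosses: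
  "crosses f c x n \<Longrightarrow> c \<le> stopped_prod_process f c x n"
proof (induction n)
  case 0
  thus ?case by (simp add: crosses_def)
qed (auto simp: crosses_Suc)

lemma stopped_prod_process_eq_prod_process:
  "\<exists>k\<le>n. stopped_prod_process f c x n = prod_process f x k"
  by (induction n) (auto intro: le_SucI)

lemma prod_process_bounds:
  assumes "\<And>t z. 0 \<le> f t z \<and> f t z \<le> B" "k \<le> n"
  shows "0 \<le> prod_process f x k" "prod_process f x k \<le> max 1 B ^ n"
proof -
  have "prod_process f x k \<le> (\<Prod>t\<in>{1..k}. max 1 B)" unfolding prod_process_def
    using assms by (intro prod_mono) (auto intro: order.trans[OF _ max.cobounded2])
  also have "\<dots> \<le> max 1 B ^ n" using assms by (simp add: power_increasing)
  finally show "prod_process f x k \<le> max 1 B ^ n" .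
  show "0 \<le> prod_process f x k" using assms unfolding prod_process_def by (auto intro: prod_nonneg)
qed

lemma stopped_prod_process_bounds:
  assumes "\<And>t z. 0 \<le> f t z \<and> f t z \<le> B"
  shows "0 \<le> stopped_prod_process f c x n" "stopped_prod_process f c x n \<le> max 1 B ^ n"
  using stopped_prod_process_eq_prod_process[of n f c x] prod_process_bounds[OF assms] by auto

lemma prod_process_cong:
  "(\<And>t. 1 \<le> t \<Longrightarrow> t \<le> n \<Longrightarrow> x t = x' t) \<Longrightarrow> k \<le> n \<Longrightarrow> prod_process f x k = prod_process f x' k"
  unfolding prod_process_def by (intro prod.cong) auto

lemma crosses_cong:
  "(\<And>t. 1 \<le> t \<Longrightarrow> t \<le> n \<Longrightarrow> x t = x' t) \<Longrightarrow> crosses f c x n = crosses f c x' n"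
  unfolding crosses_def using prod_process_cong[of n x x' _ f] by metis

lemma measurable_prod_process:
  assumes "\<And>t. f t \<in> borel_measurable borel"
    and "\<And>t. 1 \<le> t \<Longrightarrow> t \<le> n \<Longrightarrow> (\<lambda>\<omega>. x \<omega> t) \<in> borel_measurable N" "k \<le> n"
  shows "(\<lambda>\<omega>. prod_process f (x \<omega>) k) \<in> borel_measurable N"
  unfolding prod_process_def using assms
  by (intro borel_measurable_prod) (auto intro: measurable_compose[OF _ assms(1)])

lemma sets_crosses:
  assumes "\<And>t. f t \<in> borel_measurable borel"
    and "\<And>t. 1 \<le> t \<Longrightarrow> t \<le> n \<Longrightarrow> (\<lambda>\<omega>. x \<omega> t) \<in> borel_measurable N"
  shows "{\<omega> \<in> space N. crosses f c (x \<omega>) n} \<in> sets N"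
proof -
  have "{\<omega> \<in> space N. crosses f c (x \<omega>) n} = (\<Union>k\<in>{..n}. {\<omega> \<in> space N. c \<le> prod_process f (x \<omega>) k})"
    unfolding crosses_def by auto
  also have "\<dots> \<in> sets N" using measurable_prod_process[OF assms] by (intro sets.finite_UN) auto
  finally show ?thesis .
qed

lemma measurable_stopped_prod_process:
  assumes "\<And>t. f t \<in> borel_measurable borel"
    and "\<And>t. 1 \<le> t \<Longrightarrow> t \<le> n \<Longrightarrow> (\<lambda>\<omega>. x \<omega> t) \<in> borel_measurable N"
  shows "(\<lambda>\<omega>. stopped_prod_process f c (x \<omega>) n) \<in> borel_measurable N"
  using assms(2)
proof (induction n)
  case (Suc n)
  have "{\<omega> \<in> space N. crosses f c (x \<omega>) n} \<in> sets N"
    using sets_crosses[of f n x N c] assms(1) Suc.prems by auto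
  moreover have "(\<lambda>\<omega>. prod_process f (x \<omega>) (Suc n)) \<in> borel_measurable N"
    using measurable_prod_process[of f "Suc n" x N "Suc n"] assms(1) Suc.prems by auto
  ultimately show ?case using Suc by (auto intro!: measurable_If)
qed simp

lemma measurable_uncrossed_prod_process:
  assumes "\<And>t. f t \<in> borel_measurable borel"
  shows "(\<lambda>x. if crosses f c x n then 0 else prod_process f x n) \<in> borel_measurable (PiM {1..n} (\<lambda>_. borel))"
proof -
  have "(\<lambda>x. x t) \<in> borel_measurable (PiM {1..n} (\<lambda>_. borel))" if "1 \<le> t" "t \<le> n" for t
    using that by (simp add: measurable_component_singleton)
  thus ?thesis
    using sets_crosses[where x="\<lambda>x. x" and n=n and f=f] measurable_prod_process[where x="\<lambda>x. x" and n=n and k=n and f=f]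
      assms
    by (auto intro!: measurable_If)
qed

context prob_space
begin

lemma expectation_past_times_next_le:
  fixes G :: "(nat \<Rightarrow> real) \<Rightarrow> real" and f :: "real \<Rightarrow> real"
  assumes ind: "indep_vars (\<lambda>_. borel) X {1..}"
    and G: "G \<in> borel_measurable (PiM {1..n} (\<lambda>_. borel))" "\<And>x. 0 \<le> G x \<and> G x \<le> B"
    and f: "f \<in> borel_measurable borel" "\<And>z. 0 \<le> f z \<and> f z \<le> B'"
      "expectation (\<lambda>\<omega>. f (X (Suc n) \<omega>)) \<le> 1"
  defines "Y \<equiv> \<lambda>\<omega>. G (restrict (\<lambda>i. X i \<omega>) {1..n})"
  shows "expectation (\<lambda>\<omega>. Y \<omega> * f (X (Suc n) \<omega>)) \<le> expectation Y"
proof -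
  have f_meas: "(\<lambda>x. f (x (Suc n))) \<in> borel_measurable (PiM {Suc n} (\<lambda>_. borel))"
    by (intro measurable_compose[OF _ f(1)] measurable_component_singleton) auto
  have indep: "indep_var borel Y borel (\<lambda>\<omega>. f (X (Suc n) \<omega>))"
    using indep_var_compose[OF indep_var_restrict[OF ind] G(1) f_meas] unfolding Y_def by (auto simp: comp_def)
  have "Y \<in> borel_measurable M" "(\<lambda>\<omega>. f (X (Suc n) \<omega>)) \<in> borel_measurable M"
    using indep unfolding indep_var_def indep_vars_def by (auto split: bool.splits)
  hence iY: "integrable M Y" and iF: "integrable M (\<lambda>\<omega>. f (X (Suc n) \<omega>))"
    using G(2) f(2) unfolding Y_def
    by (auto intro: integrable_const_bound[where B=B] integrable_const_bound[where B=B'])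
  have "expectation (\<lambda>\<omega>. Y \<omega> * f (X (Suc n) \<omega>)) = expectation Y * expectation (\<lambda>\<omega>. f (X (Suc n) \<omega>))"
    using indep_var_lebesgue_integral[OF indep iY iF] .
  also have "\<dots> \<le> expectation Y"
    using f(3) G(2) integral_nonneg_AE[of Y M] unfolding Y_def by (simp add: mult_left_le)
  finally show ?thesis .
qed

text \<open>The product stopped at its first crossing is a supermartingale: once the level is crossed it is
  frozen, and otherwise the next factor is independent of the past and has mean at most \<open>1\<close>.\<close>
lemma expectation_stopped_prod_process_Suc_le:
  fixes c :: real
  assumes ind: "indep_vars (\<lambda>_. borel) X {1..}"
    and f: "\<And>t. f t \<in> borel_measurable borel" "\<And>t z. 0 \<le> f t z \<and> f t z \<le> B"
      "\<And>t. 1 \<le> t \<Longrightarrow> expectation (\<lambda>\<omega>. f t (X t \<omega>)) \<le> 1"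
  defines "Q \<equiv> \<lambda>n \<omega>. stopped_prod_process f c (\<lambda>t. X t \<omega>) n"
  shows "expectation (Q (Suc n)) \<le> expectation (Q n)"
proof -
  define BB where "BB = max 1 B ^ Suc n"
  define G where "G x = (if crosses f c x n then 0 else prod_process f x n)" for x
  define Y where "Y \<omega> = G (restrict (\<lambda>i. X i \<omega>) {1..n})" for \<omega>
  define Q1 where "Q1 \<omega> = (if crosses f c (\<lambda>t. X t \<omega>) n then Q n \<omega> else 0)" for \<omega>
  have X: "(\<lambda>\<omega>. X t \<omega>) \<in> borel_measurable M" if "1 \<le> t" for t
    using ind that unfolding indep_vars_def by auto
  have "max 1 B ^ n \<le> BB" "0 \<le> BB" unfolding BB_def by (auto intro: power_increasing)
  hence G_bounds: "0 \<le> G x \<and> G x \<le> BB" for x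
    using prod_process_bounds[where f=f and B=B and k=n and n=n and x=x, OF f(2)] unfolding G_def by auto
  have Q_bounds: "0 \<le> Q n \<omega> \<and> Q n \<omega> \<le> BB" for \<omega>
    using stopped_prod_process_bounds[where f=f and B=B, OF f(2)] \<open>max 1 B ^ n \<le> BB\<close> unfolding Q_def
    by (meson order.trans)
  have G_meas: "G \<in> borel_measurable (PiM {1..n} (\<lambda>_. borel))"
    unfolding G_def using measurable_uncrossed_prod_process[where f=f, OF f(1)] .
  have Y_eq: "Y \<omega> = G (\<lambda>t. X t \<omega>)" for \<omega>
    unfolding Y_def G_def
    using crosses_cong[where n=n and x="restrict (\<lambda>i. X i \<omega>) {1..n}" and x'="\<lambda>t. X t \<omega>"]
      prod_process_cong[where n=n and x="restrict (\<lambda>i. X i \<omega>) {1..n}" and x'="\<lambda>t. X t \<omega>" and k=n]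
    by auto
  have Y_meas: "Y \<in> borel_measurable M"
    unfolding Y_def using X by (auto intro!: measurable_compose[OF _ G_meas] measurable_restrict)
  have "Q n \<in> borel_measurable M"
    unfolding Q_def using X
      measurable_stopped_prod_process[where f=f, OF f(1), where n=n and x="\<lambda>\<omega> t. X t \<omega>" and N=M and c=c]
    by auto
  hence "Q1 \<in> borel_measurable M"
    unfolding Q1_def using X sets_crosses[where f=f, OF f(1), where n=n and x="\<lambda>\<omega> t. X t \<omega>" and N=M and c=c]
    by (auto intro!: measurable_If)
  hence iY: "integrable M Y" and iQ1: "integrable M Q1"
    using Y_meas G_bounds Q_bounds \<open>0 \<le> BB\<close> unfolding Y_def Q1_def
    by (auto intro!: integrable_const_bound[where B=BB])
  have "integrable M (\<lambda>\<omega>. Y \<omega> * f (Suc n) (X (Suc n) \<omega>))"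
    using Y_meas X[of "Suc n"] f(1,2) G_bounds \<open>0 \<le> BB\<close> unfolding Y_def
    by (intro integrable_const_bound[where B="BB * B"])
       (auto simp: abs_mult intro!: mult_mono measurable_compose[OF _ f(1)])
  moreover have "Q (Suc n) = (\<lambda>\<omega>. Q1 \<omega> + Y \<omega> * f (Suc n) (X (Suc n) \<omega>))"
    unfolding Q_def Q1_def Y_eq G_def by (auto simp: prod_process_Suc)
  ultimately have "expectation (Q (Suc n)) = expectation Q1 + expectation (\<lambda>\<omega>. Y \<omega> * f (Suc n) (X (Suc n) \<omega>))"
    using iQ1 by simp
  also have "\<dots> \<le> expectation Q1 + expectation Y"
    using expectation_past_times_next_le[OF ind G_meas G_bounds f(1) f(2) f(3)] unfolding Y_def by simp
  also have "\<dots> = expectation (\<lambda>\<omega>. Q1 \<omega> + Y \<omega>)" using iQ1 iY by simp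
  also have "(\<lambda>\<omega>. Q1 \<omega> + Y \<omega>) = Q n"
    unfolding Q1_def Y_eq G_def Q_def using stopped_prod_process_not_crosses by fastforce
  finally show ?thesis .
qed

theorem ville_inequality:
  assumes ind: "indep_vars (\<lambda>_. borel) X {1..}"
    and f: "\<And>t. f t \<in> borel_measurable borel" "\<And>t z. 0 \<le> f t z \<and> f t z \<le> B"
      "\<And>t. 1 \<le> t \<Longrightarrow> expectation (\<lambda>\<omega>. f t (X t \<omega>)) \<le> 1"
    and "0 < c"
  shows "prob {\<omega> \<in> space M. crosses f c (\<lambda>t. X t \<omega>) N} \<le> 1 / c"
proof -
  define Q where "Q n \<omega> = stopped_prod_process f c (\<lambda>t. X t \<omega>) n" for n \<omega>
  define A where "A = {\<omega> \<in> space M. crosses f c (\<lambda>t. X t \<omega>) N}"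
  have X: "(\<lambda>\<omega>. X t \<omega>) \<in> borel_measurable M" if "1 \<le> t" for t
    using ind that unfolding indep_vars_def by auto
  have A: "A \<in> sets M"
    unfolding A_def using sets_crosses[where f=f, OF f(1), where n=N and x="\<lambda>\<omega> t. X t \<omega>" and N=M and c=c] X
    by auto
  have E: "expectation (Q n) \<le> 1" for n
  proof (induction n)
    case 0
    thus ?case unfolding Q_def by (simp add: prob_space)
  next
    case (Suc n)
    thus ?case
      using expectation_stopped_prod_process_Suc_le[OF ind f, where c=c and n=n] unfolding Q_def by simp
  qed
  have "c * prob A \<le> expectation (Q N)"
  proof -
    have "c * prob A = expectation (\<lambda>\<omega>. c * indicator A \<omega>)" using A by simp
    also have "\<dots> \<le> expectation (Q N)"
    proof (rule integral_mono)
      show "integrable M (\<lambda>\<omega>. c * indicator A \<omega>)"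
        using A by (intro integrable_mult_right integrable_real_indicator) (auto simp: emeasure_eq_measure)
      show "integrable M (Q N)" unfolding Q_def
        using measurable_stopped_prod_process[where f=f, OF f(1), where n=N and x="\<lambda>\<omega> t. X t \<omega>" and N=M and c=c] X
          stopped_prod_process_bounds[where f=f and B=B, OF f(2)]
        by (intro integrable_const_bound[where B="max 1 B ^ N"]) auto
      show "c * indicator A \<omega> \<le> Q N \<omega>" if "\<omega> \<in> space M" for \<omega>
        using stopped_prod_process_crosses[of f c "\<lambda>t. X t \<omega>" N] stopped_prod_process_bounds[where f=f and B=B, OF f(2)]
        unfolding A_def Q_def by (auto simp: indicator_def)
    qed
    finally show ?thesis .
  qed
  with E[of N] \<open>0 < c\<close> show ?thesis unfolding A_def by (simp add: field_simps)
qed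

end

text \<open>Clamping the argument to \<open>[0,1]\<close> makes the factor bounded on all of \<open>\<real>\<close>.\<close>
definition lr_factor :: "real \<Rightarrow> real \<Rightarrow> real \<Rightarrow> real" where
  "lr_factor y \<theta> x = exp (bernoulli_llr y \<theta> (max 0 (min 1 x)))"

lemma lr_factor_eq: "0 \<le> x \<Longrightarrow> x \<le> 1 \<Longrightarrow> lr_factor y \<theta> x = exp (bernoulli_llr y \<theta> x)"
  unfolding lr_factor_def by simp

lemma borel_measurable_lr_factor [measurable]: "lr_factor y \<theta> \<in> borel_measurable borel"
  unfolding lr_factor_def bernoulli_llr_def by measurable

lemma lr_factor_bounds:
  "0 \<le> lr_factor y \<theta> x \<and> lr_factor y \<theta> x \<le> exp (\<bar>ln (\<theta> / y)\<bar> + \<bar>ln ((1 - \<theta>) / (1 - y))\<bar>)"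
proof -
  define z where "z = max 0 (min 1 x)"
  have "z * ln (\<theta> / y) \<le> \<bar>ln (\<theta> / y)\<bar>" "(1 - z) * ln ((1 - \<theta>) / (1 - y)) \<le> \<bar>ln ((1 - \<theta>) / (1 - y))\<bar>"
  proof -
    have "w * l \<le> \<bar>l\<bar>" if "0 \<le> w" "w \<le> 1" for w l :: real
      using that mult_left_mono[of l "\<bar>l\<bar>" w] mult_left_le_one_le[of "\<bar>l\<bar>" w] by linarith
    moreover have "0 \<le> z" "z \<le> 1" unfolding z_def by auto
    ultimately show "z * ln (\<theta> / y) \<le> \<bar>ln (\<theta> / y)\<bar>"
      "(1 - z) * ln ((1 - \<theta>) / (1 - y)) \<le> \<bar>ln ((1 - \<theta>) / (1 - y))\<bar>" by simp_all
  qed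
  thus ?thesis unfolding lr_factor_def bernoulli_llr_def z_def[symmetric] by simp
qed

lemma lr_factor_le_affine:
  assumes "0 < y" "y < 1" "0 < \<theta>" "\<theta> < 1" "0 \<le> x" "x \<le> 1"
  shows "lr_factor y \<theta> x \<le> (1 - x) * ((1 - \<theta>) / (1 - y)) + x * (\<theta> / y)"
proof -
  have "lr_factor y \<theta> x = exp ((1 - x) *\<^sub>R ln ((1 - \<theta>) / (1 - y)) + x *\<^sub>R ln (\<theta> / y))"
    unfolding lr_factor_def bernoulli_llr_def using assms by (simp add: algebra_simps)
  also have "\<dots> \<le> (1 - x) * exp (ln ((1 - \<theta>) / (1 - y))) + x * exp (ln (\<theta> / y))"
    using assms by (intro convex_onD[OF exp_convex]) auto
  finally show ?thesis using assms by simp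
qed

lemma (in prob_space) expectation_lr_factor_le_1:
  assumes "0 < y" "y < 1" "0 < \<theta>" "\<theta> < 1" "random_variable borel Z"
    and "\<And>\<omega>. \<omega> \<in> space M \<Longrightarrow> 0 \<le> Z \<omega> \<and> Z \<omega> \<le> 1" "expectation Z = y"
  shows "expectation (\<lambda>\<omega>. lr_factor y \<theta> (Z \<omega>)) \<le> 1"
proof -
  have iZ: "integrable M Z"
    using assms by (intro integrable_const_bound[where B=1]) auto
  have "integrable M (\<lambda>\<omega>. lr_factor y \<theta> (Z \<omega>))"
    using lr_factor_bounds[of y \<theta>] assms
    by (intro integrable_const_bound[where B="exp (\<bar>ln (\<theta> / y)\<bar> + \<bar>ln ((1 - \<theta>) / (1 - y))\<bar>)"]) auto
  hence "expectation (\<lambda>\<omega>. lr_factor y \<theta> (Z \<omega>))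
           \<le> expectation (\<lambda>\<omega>. (1 - Z \<omega>) * ((1 - \<theta>) / (1 - y)) + Z \<omega> * (\<theta> / y))"
    using lr_factor_le_affine assms iZ by (intro integral_mono) auto
  also have "\<dots> = (1 - y) * ((1 - \<theta>) / (1 - y)) + y * (\<theta> / y)"
    using iZ assms by (simp add: algebra_simps prob_space)
  also have "\<dots> = 1" using assms by simp
  finally show ?thesis .
qed

lemma summable_le_telescoping:
  fixes a g :: "nat \<Rightarrow> real"
  assumes "\<And>m. 0 \<le> a (Suc m)" "\<And>m. a (Suc m) \<le> g m - g (Suc m)" "g \<longlonglongrightarrow> 0"
  shows "summable a" "suminf a \<le> a 0 + g 0"
proof -
  have tele: "(\<lambda>m. g m - g (Suc m)) sums g 0" using telescope_sums'[OF assms(3)] by simp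
  have "summable (\<lambda>m. a (Suc m))"
    by (rule summable_comparison_test'[OF sums_summable[OF tele], of 0]) (use assms in auto)
  thus "summable a" by (simp add: summable_Suc_iff)
  have "(\<Sum>m. a (Suc m)) \<le> g 0"
    using suminf_le[OF _ \<open>summable (\<lambda>m. a (Suc m))\<close> sums_summable[OF tele]] assms(2) tele
    by (simp add: sums_iff)
  thus "suminf a \<le> a 0 + g 0" using suminf_split_head[OF \<open>summable a\<close>] by simp
qed

lemma dyadic_scale_series:
  "summable (\<lambda>m::nat. 1 / (1 + real m / 2)\<^sup>2)" "(\<Sum>m. 1 / (1 + real m / 2)\<^sup>2) \<le> 3"
proof -
  have step: "1 / (1 + real (Suc m) / 2)\<^sup>2 \<le> 2 / (1 + real m / 2) - 2 / (1 + real (Suc m) / 2)" for m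
  proof -
    define u where "u = 1 + real m / 2"
    have "1 \<le> u" unfolding u_def by simp
    have "1 / (u + 1/2)\<^sup>2 \<le> 1 / (u * (u + 1/2))"
      using \<open>1 \<le> u\<close> by (intro divide_left_mono) (auto simp: power2_eq_square intro!: mult_right_mono)
    also have "\<dots> = 2 / u - 2 / (u + 1/2)" using \<open>1 \<le> u\<close> by (simp add: field_simps)
    finally show ?thesis unfolding u_def by (simp add: field_simps)
  qed
  have lim: "(\<lambda>m::nat. 2 / (1 + real m / 2)) \<longlonglongrightarrow> 0" by real_asymp
  show "summable (\<lambda>m::nat. 1 / (1 + real m / 2)\<^sup>2)"
    using summable_le_telescoping(1)[OF _ step lim] by simp
  show "(\<Sum>m. 1 / (1 + real m / 2)\<^sup>2) \<le> 3"
    using summable_le_telescoping(2)[OF _ step lim] by simp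
qed

lemma inverse_sqrt_step:
  assumes "1 \<le> k"
  shows "1 / ((k + 1) * sqrt (k + 1)) \<le> 2 / sqrt k - 2 / sqrt (k + 1)"
proof -
  define p q where "p = sqrt k" and "q = sqrt (k + 1)"
  have pq: "1 \<le> p" "p \<le> q" "p\<^sup>2 = k" "q\<^sup>2 = k + 1" unfolding p_def q_def using assms by auto
  have "(q - p) * (q + p) = 1" using pq by (simp add: algebra_simps power2_eq_square)
  hence "q - p = 1 / (q + p)" using pq by (simp add: eq_divide_eq)
  moreover have "2 / p - 2 / q = 2 * (q - p) / (p * q)" using pq by (simp add: field_simps)
  ultimately have "2 / p - 2 / q = 2 / (p * q * (q + p))" by simp
  moreover have "2 / (q * q * (q + q)) \<le> 2 / (p * q * (q + p))"
    using pq by (intro divide_left_mono mult_mono) auto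
  moreover have "q * q * (q + q) = 2 * ((k + 1) * q)" using pq by (simp add: power2_eq_square[symmetric])
  ultimately show ?thesis unfolding p_def q_def using assms by simp
qed

lemma three_halves_series:
  "summable (\<lambda>s::nat. 1 / (real (Suc s) * sqrt (real (Suc s))))"
  "(\<Sum>s. 1 / (real (Suc s) * sqrt (real (Suc s)))) \<le> 3"
proof -
  have step: "1 / (real (Suc (Suc s)) * sqrt (real (Suc (Suc s))))
                \<le> 2 / sqrt (real s + 1) - 2 / sqrt (real (Suc s) + 1)" for s
    using inverse_sqrt_step[of "real s + 1"] by (simp add: add.commute)
  have lim: "(\<lambda>s::nat. 2 / sqrt (real s + 1)) \<longlonglongrightarrow> 0" by real_asymp
  show "summable (\<lambda>s::nat. 1 / (real (Suc s) * sqrt (real (Suc s))))"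
    using summable_le_telescoping(1)[OF _ step lim] by simp
  show "(\<Sum>s. 1 / (real (Suc s) * sqrt (real (Suc s)))) \<le> 3"
    using summable_le_telescoping(2)[OF _ step lim] by simp
qed

section \<open>Covering large GLR statistics by grid crossings\<close>

definition two_phase_lr :: "real \<Rightarrow> nat \<Rightarrow> real \<Rightarrow> real \<Rightarrow> nat \<Rightarrow> real \<Rightarrow> real" where
  "two_phase_lr y s \<theta>\<^sub>1 \<theta>\<^sub>2 t = (if t \<le> s then lr_factor y \<theta>\<^sub>1 else lr_factor y \<theta>\<^sub>2)"

lemma prod_process_two_phase_lr:
  assumes "1 \<le> s" "s < n" "\<And>t. 1 \<le> t \<Longrightarrow> t \<le> n \<Longrightarrow> 0 \<le> x t \<and> x t \<le> 1"
  shows "prod_process (two_phase_lr y s \<theta>\<^sub>1 \<theta>\<^sub>2) x n =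
           exp (real s * bernoulli_llr y \<theta>\<^sub>1 ((\<Sum>t\<in>{1..s}. x t) / real s)
              + real (n - s) * bernoulli_llr y \<theta>\<^sub>2 ((\<Sum>t\<in>{s+1..n}. x t) / real (n - s)))"
proof -
  have split: "{1..n} = {1..s} \<union> {s+1..n}" "{1..s} \<inter> {s+1..n} = {}" using assms by auto
  have "prod_process (two_phase_lr y s \<theta>\<^sub>1 \<theta>\<^sub>2) x n
          = (\<Prod>t\<in>{1..s}. exp (bernoulli_llr y \<theta>\<^sub>1 (x t))) * (\<Prod>t\<in>{s+1..n}. exp (bernoulli_llr y \<theta>\<^sub>2 (x t)))"
    unfolding prod_process_def split(1) prod.union_disjoint[OF finite_atLeastAtMost finite_atLeastAtMost split(2)]
    using assms by (intro arg_cong2[where f="(*)"] prod.cong) (auto simp: two_phase_lr_def lr_factor_eq)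
  also have "\<dots> = exp ((\<Sum>t\<in>{1..s}. bernoulli_llr y \<theta>\<^sub>1 (x t)) + (\<Sum>t\<in>{s+1..n}. bernoulli_llr y \<theta>\<^sub>2 (x t)))"
    by (simp add: exp_sum exp_add)
  finally show ?thesis using assms(1,2) by (simp add: sum_bernoulli_llr)
qed

definition grid_point :: "real \<Rightarrow> nat \<Rightarrow> nat \<Rightarrow> nat \<Rightarrow> real" where
  "grid_point \<delta> s m j = 2 ^ m * (1 + real j / real (grid_size \<delta> s m))"

text \<open>The alternative tested after a change at \<open>s\<close> when \<open>n - s \<in> [2^m, 2^(m+1))\<close>: \<open>j\<close> locates \<open>n - s\<close>
  between consecutive grid points, \<open>i\<close> discretises the part of the threshold carried by the first
  segment, and \<open>up\<^sub>1\<close>, \<open>up\<^sub>2\<close> record on which side of \<open>y\<close> the two empirical means lie.\<close>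
definition grid_lr :: "real \<Rightarrow> real \<Rightarrow> nat \<Rightarrow> nat \<Rightarrow> nat \<Rightarrow> nat \<Rightarrow> bool \<Rightarrow> bool \<Rightarrow> nat \<Rightarrow> real \<Rightarrow> real" where
  "grid_lr y \<delta> s m j i up\<^sub>1 up\<^sub>2 = two_phase_lr y s (kl_tilt y (real i / real s) up\<^sub>1)
     (kl_tilt y (max 0 (grid_thr \<delta> s m - real i - 1) / grid_point \<delta> s m (Suc j)) up\<^sub>2)"

lemma grid_index_exists:
  assumes "0 < K" "2 ^ m \<le> r" "r < 2 ^ Suc m"
  obtains j :: nat where "j < K" "2 ^ m * (1 + real j / real K) \<le> real r"
    "real r < 2 ^ m * (1 + real (Suc j) / real K)"
proof -
  define \<tau> where "\<tau> = (real r / 2 ^ m - 1) * real K"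
  have "(2::real) ^ m \<le> real r" "real r < 2 * 2 ^ m"
    using assms(2,3) of_nat_le_iff[of "2 ^ m" r] of_nat_less_iff[of r "2 ^ Suc m"] by simp_all
  hence "1 \<le> real r / 2 ^ m" "real r / 2 ^ m < 2" by (simp_all add: field_simps)
  hence \<tau>: "0 \<le> \<tau>" "\<tau> < real K" unfolding \<tau>_def using assms(1) by auto
  have r: "real r = 2 ^ m * (1 + \<tau> / real K)" unfolding \<tau>_def using assms(1) by (simp add: field_simps)
  show ?thesis
  proof (rule that[of "nat \<lfloor>\<tau>\<rfloor>"])
    show "nat \<lfloor>\<tau>\<rfloor> < K" using \<tau> by linarith
    show "2 ^ m * (1 + real (nat \<lfloor>\<tau>\<rfloor>) / real K) \<le> real r"
      unfolding r using \<tau> assms(1) by (intro mult_left_mono add_left_mono divide_right_mono) auto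
    show "real r < 2 ^ m * (1 + real (Suc (nat \<lfloor>\<tau>\<rfloor>)) / real K)"
      unfolding r using \<tau> assms(1)
      by (intro mult_strict_left_mono add_strict_left_mono divide_strict_right_mono) (auto, linarith)
  qed
qed

lemma threshold_share_exists:
  assumes "0 \<le> u"
  obtains i :: nat where "i \<le> K" "i = 0 \<or> real i < u" "u \<le> real i + 1 \<or> (real K < u \<and> i = K)"
proof (cases "real K < u")
  case False
  show ?thesis
    by (rule that[of "nat \<lceil>u\<rceil> - 1"]) (use assms False in linarith)+
qed (use that in auto)

lemma grid_level_le_share:
  fixes W K i :: real
  assumes "1 \<le> W" "0 < K" "0 \<le> i"
  shows "(W - 1) * K / (K + 1) \<le> i + max 0 (W - i - 1) * K / (K + 1)"
proof (cases "0 \<le> W - i - 1")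
  case True
  have "(W - i - 1) * K / (K + 1) = (W - 1) * K / (K + 1) - i * (K / (K + 1))"
    by (simp add: diff_divide_distrib add_divide_distrib algebra_simps)
  moreover have "i * (K / (K + 1)) \<le> i" using assms by (intro mult_right_le_one_le) auto
  ultimately show ?thesis using True by simp
next
  case False
  have "(W - 1) * K / (K + 1) \<le> W - 1" using assms by (simp add: field_simps)
  thus ?thesis using False by simp
qed

lemma mean_in_unit_interval:
  assumes "finite A" "A \<noteq> {}" "\<And>t. t \<in> A \<Longrightarrow> 0 \<le> x t \<and> x t \<le> 1"
  shows "0 \<le> (\<Sum>t\<in>A. x t) / card A" "(\<Sum>t\<in>A. x t) / card A \<le> 1"
proof -
  have "0 \<le> (\<Sum>t\<in>A. x t)" using assms by (auto intro: sum_nonneg)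
  moreover have "(\<Sum>t\<in>A. x t) \<le> (\<Sum>t\<in>A. 1)" using assms by (intro sum_mono) auto
  ultimately have "0 \<le> (\<Sum>t\<in>A. x t)" "(\<Sum>t\<in>A. x t) \<le> card A" by simp_all
  moreover have "0 < real (card A)" using assms by (simp add: card_gt_0_iff)
  ultimately show "0 \<le> (\<Sum>t\<in>A. x t) / card A" "(\<Sum>t\<in>A. x t) / card A \<le> 1"
    by (simp_all add: divide_le_eq_1)
qed

lemma bernoulli_llr_first_segment_ge:
  assumes "0 < y" "y < 1" "0 \<le> a" "a \<le> 1" "1 \<le> s" "i = 0 \<or> real i < real s * kl a y"
  shows "real i \<le> real s * bernoulli_llr y (kl_tilt y (real i / real s) (y \<le> a)) a"
proof -
  have "real i / real s \<le> 0 \<or> real i / real s < kl a y"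
    using assms(5,6) by (auto simp: field_simps)
  thus ?thesis
    using bernoulli_llr_kl_tilt_ge[OF assms(1-4), of "real i / real s"] assms(5) by (simp add: field_simps)
qed

lemma bernoulli_llr_second_segment_ge:
  fixes r R R' K w :: real
  assumes "0 < y" "y < 1" "0 \<le> b" "b \<le> 1" "0 < R" "R \<le> r" "r < R'" "0 < K"
    and "R' * K \<le> R * (K + 1)" "w \<le> 0 \<or> w \<le> r * kl b y"
  shows "max 0 w * K / (K + 1) \<le> r * bernoulli_llr y (kl_tilt y (max 0 w / R') (y \<le> b)) b"
proof -
  define q where "q = max 0 w / R'"
  have "q \<le> 0 \<or> q < kl b y"
  proof (cases "0 < w")
    case True
    hence "w / r \<le> kl b y" using assms(5,6,10) by (simp add: field_simps)
    moreover have "w / R' < w / r" using True assms(5-7) by (intro divide_strict_left_mono) auto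
    ultimately show ?thesis unfolding q_def using True by simp
  qed (simp add: q_def)
  hence "q \<le> bernoulli_llr y (kl_tilt y q (y \<le> b)) b"
    using bernoulli_llr_kl_tilt_ge[OF assms(1-4)] by simp
  moreover have "0 \<le> q" unfolding q_def using assms(5-7) by simp
  ultimately have "R * q \<le> r * bernoulli_llr y (kl_tilt y q (y \<le> b)) b"
    using assms(5,6) by (meson mult_mono less_imp_le order.trans)
  moreover have "max 0 w * K / (K + 1) \<le> R * q"
  proof -
    have "max 0 w * (R' * K) \<le> max 0 w * (R * (K + 1))" using assms(9) by (intro mult_left_mono) auto
    thus ?thesis using assms(5-8) unfolding q_def by (simp add: field_simps)
  qed
  ultimately show ?thesis unfolding q_def by linarith
qed

lemma crosses_grid_lr:
  fixes x :: "nat \<Rightarrow> real" and s n :: nat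
  defines "a \<equiv> (\<Sum>t\<in>{1..s}. x t) / real s" and "b \<equiv> (\<Sum>t\<in>{s+1..n}. x t) / real (n - s)"
  assumes y: "0 < y" "y < 1" and \<delta>: "0 < \<delta>" "\<delta> \<le> 1"
    and x: "\<And>t. 1 \<le> t \<Longrightarrow> 0 \<le> x t \<and> x t \<le> 1" and s: "1 \<le> s" "s < n"
    and large: "thr_lower \<delta> n \<le> real s * kl a y + real (n - s) * kl b y"
  shows "\<exists>m j i up\<^sub>1 up\<^sub>2. j < grid_size \<delta> s m \<and> i \<le> grid_size \<delta> s m \<and>
           crosses (grid_lr y \<delta> s m j i up\<^sub>1 up\<^sub>2) (exp (grid_level \<delta> s m)) x (s + 2 ^ Suc m)"
proof -
  define r where "r = n - s"
  have r: "1 \<le> r" "n = s + r" using s unfolding r_def by auto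
  have a: "0 \<le> a" "a \<le> 1" and b: "0 \<le> b" "b \<le> 1"
    using mean_in_unit_interval[of "{1..s}" x] mean_in_unit_interval[of "{s+1..n}" x] x s
    unfolding a_def b_def by auto
  obtain m where m: "2 ^ m \<le> r" "r < 2 ^ Suc m" using ex_power_ivl1[of 2 r] r by auto
  define W K where "W = grid_thr \<delta> s m" and "K = grid_size \<delta> s m"
  have W: "9 \<le> W" "W \<le> K" "K \<le> W + 1"
    using grid_thr_ge_9[OF \<delta> s(1)] grid_size_bounds[OF \<delta> s(1)] unfolding W_def K_def by auto
  have "(2::real) ^ m \<le> real r" using m(1) of_nat_le_iff[of "2 ^ m" r] by simp
  hence "W \<le> thr_lower \<delta> n"
    unfolding W_def grid_thr_def using thr_lower_mono[OF \<delta>, of "real s + 2 ^ m" n]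
      dyadic_sum_ge_2[OF s(1), of m] r by simp
  define u v where "u = real s * kl a y" and "v = real r * kl b y"
  have uv: "0 \<le> u" "0 \<le> v" "W \<le> u + v"
    using kl_nonneg a b y large \<open>W \<le> thr_lower \<delta> n\<close> unfolding u_def v_def r_def by auto
  obtain j where j: "j < K" "grid_point \<delta> s m j \<le> real r" "real r < grid_point \<delta> s m (Suc j)"
    using grid_index_exists[of K m r] m W unfolding grid_point_def K_def by auto
  obtain i where i: "i \<le> K" "i = 0 \<or> real i < u" "u \<le> real i + 1 \<or> (real K < u \<and> i = K)"
    using threshold_share_exists[OF uv(1)] by blast
  define w where "w = W - real i - 1"
  have "w \<le> 0 \<or> w \<le> real r * kl b y" using i(3) uv W unfolding w_def v_def by auto
  moreover have "0 < grid_point \<delta> s m j"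
    "grid_point \<delta> s m (Suc j) * real K \<le> grid_point \<delta> s m j * (real K + 1)"
    using W unfolding grid_point_def K_def[symmetric] by (auto simp: field_simps add_pos_nonneg)
  ultimately have right: "max 0 w * real K / (real K + 1)
      \<le> real r * bernoulli_llr y (kl_tilt y (max 0 w / grid_point \<delta> s m (Suc j)) (y \<le> b)) b"
    using bernoulli_llr_second_segment_ge[OF y b] j W by simp
  have "grid_level \<delta> s m \<le> real s * bernoulli_llr y (kl_tilt y (real i / real s) (y \<le> a)) a
        + real r * bernoulli_llr y (kl_tilt y (max 0 w / grid_point \<delta> s m (Suc j)) (y \<le> b)) b"
    using grid_level_le_share[of W "real K" "real i"] right W
      bernoulli_llr_first_segment_ge[OF y a s(1) i(2)[unfolded u_def]]
    unfolding grid_level_def W_def[symmetric] K_def[symmetric] w_def by linarith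
  moreover have "prod_process (grid_lr y \<delta> s m j i (y \<le> a) (y \<le> b)) x n
      = exp (real s * bernoulli_llr y (kl_tilt y (real i / real s) (y \<le> a)) a
             + real r * bernoulli_llr y (kl_tilt y (max 0 w / grid_point \<delta> s m (Suc j)) (y \<le> b)) b)"
    using prod_process_two_phase_lr[OF s, of x] x
    unfolding grid_lr_def a_def b_def r_def w_def W_def by simp
  ultimately have "exp (grid_level \<delta> s m) \<le> prod_process (grid_lr y \<delta> s m j i (y \<le> a) (y \<le> b)) x n"
    by simp
  moreover have "n \<le> s + 2 ^ Suc m" using m r by simp
  ultimately show ?thesis using i j unfolding crosses_def K_def by blast
qed

lemma glr_tau_finite_imp:
  assumes "glr_tau X \<delta> \<omega> < \<infinity>" shows "\<exists>n\<ge>2. beta_thr n \<delta> \<le> glr_stat X n \<omega>"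
proof (rule ccontr)
  assume "\<not> (\<exists>n\<ge>2. beta_thr n \<delta> \<le> glr_stat X n \<omega>)"
  hence empty: "{n. 2 \<le> n \<and> beta_thr n \<delta> \<le> glr_stat X n \<omega>} = {}" by auto
  have "glr_tau X \<delta> \<omega> = \<infinity>" unfolding glr_tau_def empty by (simp add: top_enat_def)
  thus False using assms by simp
qed

lemma glr_stat_attained:
  assumes "2 \<le> n"
  obtains s where "1 \<le> s" "s < n" "glr_stat X n \<omega> = real s * kl (emp_mean X 1 s \<omega>) (emp_mean X 1 n \<omega>)
      + real (n - s) * kl (emp_mean X (s+1) n \<omega>) (emp_mean X 1 n \<omega>)"
proof -
  let ?f = "\<lambda>s. real s * kl (emp_mean X 1 s \<omega>) (emp_mean X 1 n \<omega>)
                + real (n - s) * kl (emp_mean X (s+1) n \<omega>) (emp_mean X 1 n \<omega>)"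
  have "Max (?f ` {1..<n}) \<in> ?f ` {1..<n}" using assms by (intro Max_in) auto
  thus ?thesis using that unfolding glr_stat_def by auto
qed

lemma emp_mean_split:
  assumes "1 \<le> s" "s < n"
  shows "emp_mean X 1 s \<omega> = (\<Sum>t\<in>{1..s}. X t \<omega>) / real s"
    and "emp_mean X (s+1) n \<omega> = (\<Sum>t\<in>{s+1..n}. X t \<omega>) / real (n - s)"
    and "emp_mean X 1 n \<omega> = (real s * emp_mean X 1 s \<omega> + real (n - s) * emp_mean X (s+1) n \<omega>)
                              / (real s + real (n - s))"
proof -
  show s: "emp_mean X 1 s \<omega> = (\<Sum>t\<in>{1..s}. X t \<omega>) / real s" unfolding emp_mean_def by simp
  show r: "emp_mean X (s+1) n \<omega> = (\<Sum>t\<in>{s+1..n}. X t \<omega>) / real (n - s)"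
    unfolding emp_mean_def using assms by (simp add: of_nat_diff)
  have split: "{1..n} = {1..s} \<union> {s+1..n}" "{1..s} \<inter> {s+1..n} = {}" using assms by auto
  have "(\<Sum>t\<in>{1..n}. X t \<omega>) = (\<Sum>t\<in>{1..s}. X t \<omega>) + (\<Sum>t\<in>{s+1..n}. X t \<omega>)"
    unfolding split(1) by (rule sum.union_disjoint) (use split(2) in auto)
  moreover have "real s + real (n - s) = real n" using assms by (simp add: of_nat_diff)
  ultimately show "emp_mean X 1 n \<omega> = (real s * emp_mean X 1 s \<omega> + real (n - s) * emp_mean X (s+1) n \<omega>)
                                      / (real s + real (n - s))"
    unfolding s r using assms unfolding emp_mean_def by simp
qed

lemma glr_alarm_imp_grid_crossing:
  assumes y: "0 < y" "y < 1" and \<delta>: "0 < \<delta>" "\<delta> \<le> 1"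
    and X: "\<And>t. 1 \<le> t \<Longrightarrow> 0 \<le> X t \<omega> \<and> X t \<omega> \<le> 1" and "glr_tau X \<delta> \<omega> < \<infinity>"
  shows "\<exists>s m j i up\<^sub>1 up\<^sub>2. 1 \<le> s \<and> j < grid_size \<delta> s m \<and> i \<le> grid_size \<delta> s m \<and>
           crosses (grid_lr y \<delta> s m j i up\<^sub>1 up\<^sub>2) (exp (grid_level \<delta> s m)) (\<lambda>t. X t \<omega>) (s + 2 ^ Suc m)"
proof -
  obtain n where n: "2 \<le> n" "beta_thr n \<delta> \<le> glr_stat X n \<omega>" using glr_tau_finite_imp[OF assms(6)] by blast
  obtain s where s: "1 \<le> s" "s < n" and stat: "glr_stat X n \<omega> =
      real s * kl (emp_mean X 1 s \<omega>) (emp_mean X 1 n \<omega>) + real (n - s) * kl (emp_mean X (s+1) n \<omega>) (emp_mean X 1 n \<omega>)"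
    by (rule glr_stat_attained[OF n(1)])
  define a b where "a = (\<Sum>t\<in>{1..s}. X t \<omega>) / real s" and "b = (\<Sum>t\<in>{s+1..n}. X t \<omega>) / real (n - s)"
  have "0 \<le> a" "a \<le> 1" "0 \<le> b" "b \<le> 1"
    using mean_in_unit_interval[of "{1..s}" "\<lambda>t. X t \<omega>"] mean_in_unit_interval[of "{s+1..n}" "\<lambda>t. X t \<omega>"] X s
    unfolding a_def b_def by auto
  hence "glr_stat X n \<omega> \<le> real s * kl a y + real (n - s) * kl b y"
    using weighted_kl_le_at_mean[of "real s" "real (n - s)" a b y] stat emp_mean_split[OF s, of X \<omega>] s y
    unfolding a_def b_def by simp
  moreover have "thr_lower \<delta> n \<le> beta_thr n \<delta>" using beta_thr_ge_thr_lower[OF \<delta>] n by simp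
  ultimately have "thr_lower \<delta> n \<le> real s * kl a y + real (n - s) * kl b y" using n by linarith
  from crosses_grid_lr[OF y \<delta> _ s this[unfolded a_def b_def]] X
  obtain m j i up\<^sub>1 up\<^sub>2 where "j < grid_size \<delta> s m" "i \<le> grid_size \<delta> s m"
    "crosses (grid_lr y \<delta> s m j i up\<^sub>1 up\<^sub>2) (exp (grid_level \<delta> s m)) (\<lambda>t. X t \<omega>) (s + 2 ^ Suc m)"
    by auto
  thus ?thesis using s(1) by blast
qed

lemma glr_tau_constant:
  assumes "\<And>t. 1 \<le> t \<Longrightarrow> X t \<omega> = c" "0 \<le> c" "c \<le> 1" "0 < \<delta>" "\<delta> \<le> 1"
  shows "glr_tau X \<delta> \<omega> = \<infinity>"
proof (rule ccontr)
  assume "glr_tau X \<delta> \<omega> \<noteq> \<infinity>"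
  hence "glr_tau X \<delta> \<omega> < \<infinity>" by (cases "glr_tau X \<delta> \<omega>") auto
  from glr_tau_finite_imp[OF this]
  obtain n where n: "2 \<le> n" "beta_thr n \<delta> \<le> glr_stat X n \<omega>" by blast
  obtain s where "1 \<le> s" "s < n" and stat: "glr_stat X n \<omega> =
      real s * kl (emp_mean X 1 s \<omega>) (emp_mean X 1 n \<omega>) + real (n - s) * kl (emp_mean X (s+1) n \<omega>) (emp_mean X 1 n \<omega>)"
    by (rule glr_stat_attained[OF n(1)])
  have "emp_mean X k k' \<omega> = c" if "1 \<le> k" "k \<le> k'" for k k'
  proof -
    have "(\<Sum>j = k..k'. X j \<omega>) = (\<Sum>j = k..k'. c)" using assms(1) that by (intro sum.cong) auto
    thus ?thesis unfolding emp_mean_def using that by (simp add: of_nat_diff field_simps)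
  qed
  hence "emp_mean X 1 s \<omega> = c" "emp_mean X (s+1) n \<omega> = c" "emp_mean X 1 n \<omega> = c"
    using \<open>1 \<le> s\<close> \<open>s < n\<close> by auto
  hence "glr_stat X n \<omega> = 0" using stat kl_same[OF assms(2,3)] by simp
  moreover have "9 \<le> beta_thr n \<delta>"
  proof -
    have "thr_lower \<delta> (real n) \<le> beta_thr n \<delta>" using beta_thr_ge_thr_lower[OF assms(4,5)] n by simp
    moreover have "9 \<le> thr_lower \<delta> (real n)" using thr_lower_ge_9[OF assms(4,5)] n by simp
    ultimately show ?thesis by linarith
  qed
  ultimately show False using n by simp
qed

section \<open>Bounding the probability of a false alarm\<close>

definition grid_params :: "real \<Rightarrow> nat \<Rightarrow> nat \<Rightarrow> (nat \<times> nat \<times> bool \<times> bool) set" where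
  "grid_params \<delta> s m = {..<grid_size \<delta> s m} \<times> {..grid_size \<delta> s m} \<times> UNIV \<times> UNIV"

definition grid_event ::
    "'a measure \<Rightarrow> (nat \<Rightarrow> 'a \<Rightarrow> real) \<Rightarrow> real \<Rightarrow> real \<Rightarrow> nat \<Rightarrow> nat \<Rightarrow> nat \<times> nat \<times> bool \<times> bool \<Rightarrow> 'a set" where
  "grid_event M X y \<delta> s m = (\<lambda>(j, i, up\<^sub>1, up\<^sub>2). {\<omega> \<in> space M.
     crosses (grid_lr y \<delta> s m j i up\<^sub>1 up\<^sub>2) (exp (grid_level \<delta> s m)) (\<lambda>t. X t \<omega>) (s + 2 ^ Suc m)})"

lemma card_grid_params: "card (grid_params \<delta> s m) = 4 * grid_size \<delta> s m * (grid_size \<delta> s m + 1)"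
  unfolding grid_params_def by (simp add: card_cartesian_product algebra_simps)

lemma borel_measurable_grid_lr: "grid_lr y \<delta> s m j i up\<^sub>1 up\<^sub>2 t \<in> borel_measurable borel"
  unfolding grid_lr_def two_phase_lr_def by simp

lemma (in prob_space) prob_UN_le_suminf:
  assumes "\<And>n. A n \<in> events" "\<And>n. prob (A n) \<le> b n" "summable b"
  shows "prob (\<Union>n. A n) \<le> suminf b"
proof -
  have "summable (\<lambda>n. prob (A n))"
    by (rule summable_comparison_test'[OF assms(3), of 0]) (use assms(2) in auto)
  hence "prob (\<Union>n. A n) \<le> (\<Sum>n. prob (A n))"
    using assms(1) by (intro finite_measure_subadditive_countably) auto
  also have "\<dots> \<le> suminf b" using assms(2,3) \<open>summable (\<lambda>n. prob (A n))\<close> by (intro suminf_le) auto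
  finally show ?thesis .
qed

lemma glr_alarm_subset_grid_events:
  assumes "0 < y" "y < 1" "0 < \<delta>" "\<delta> \<le> 1"
    and "\<And>t \<omega>. 1 \<le> t \<Longrightarrow> \<omega> \<in> space M \<Longrightarrow> 0 \<le> X t \<omega> \<and> X t \<omega> \<le> 1"
  shows "{\<omega> \<in> space M. glr_tau X \<delta> \<omega> < \<infinity>}
           \<subseteq> (\<Union>s. \<Union>m. \<Union>p\<in>grid_params \<delta> (Suc s) m. grid_event M X y \<delta> (Suc s) m p)"
proof
  fix \<omega> assume \<omega>: "\<omega> \<in> {\<omega> \<in> space M. glr_tau X \<delta> \<omega> < \<infinity>}"
  then obtain s m j i up\<^sub>1 up\<^sub>2 where "1 \<le> s" "j < grid_size \<delta> s m" "i \<le> grid_size \<delta> s m"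
    "crosses (grid_lr y \<delta> s m j i up\<^sub>1 up\<^sub>2) (exp (grid_level \<delta> s m)) (\<lambda>t. X t \<omega>) (s + 2 ^ Suc m)"
    using glr_alarm_imp_grid_crossing[of y \<delta> X \<omega>] assms by auto
  moreover from this have "s = Suc (s - 1)" by simp
  ultimately show "\<omega> \<in> (\<Union>s. \<Union>m. \<Union>p\<in>grid_params \<delta> (Suc s) m. grid_event M X y \<delta> (Suc s) m p)"
    using \<omega> unfolding grid_params_def grid_event_def
    by (intro UN_I[of "s - 1"] UN_I[of m] UN_I[of "(j, i, up\<^sub>1, up\<^sub>2)"]) auto
qed

context prob_space
begin

context
  fixes X :: "nat \<Rightarrow> 'a \<Rightarrow> real" and y :: real
  assumes ind: "indep_vars (\<lambda>_. borel) X {1..}"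
    and bounded: "\<And>t \<omega>. 1 \<le> t \<Longrightarrow> \<omega> \<in> space M \<Longrightarrow> 0 \<le> X t \<omega> \<and> X t \<omega> \<le> 1"
    and mean: "\<And>t. 1 \<le> t \<Longrightarrow> expectation (X t) = y"
    and y: "0 < y" "y < 1"
begin

lemma grid_event_in_events: "grid_event M X y \<delta> s m p \<in> events"
proof -
  have "(\<lambda>\<omega>. X t \<omega>) \<in> borel_measurable M" if "1 \<le> t" for t
    using ind that unfolding indep_vars_def by auto
  thus ?thesis unfolding grid_event_def
    by (auto split: prod.split intro!: sets_crosses borel_measurable_grid_lr)
qed

lemma prob_grid_event_le: "prob (grid_event M X y \<delta> s m p) \<le> exp (- grid_level \<delta> s m)"
proof -
  obtain j i up\<^sub>1 up\<^sub>2 where p: "p = (j, i, up\<^sub>1, up\<^sub>2)" by (cases p) auto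
  define \<theta>\<^sub>1 \<theta>\<^sub>2 where "\<theta>\<^sub>1 = kl_tilt y (real i / real s) up\<^sub>1"
    and "\<theta>\<^sub>2 = kl_tilt y (max 0 (grid_thr \<delta> s m - real i - 1) / grid_point \<delta> s m (Suc j)) up\<^sub>2"
  have \<theta>: "0 < \<theta>\<^sub>1" "\<theta>\<^sub>1 < 1" "0 < \<theta>\<^sub>2" "\<theta>\<^sub>2 < 1"
    unfolding \<theta>\<^sub>1_def \<theta>\<^sub>2_def using kl_tilt_bounds[OF y] by auto
  have f: "grid_lr y \<delta> s m j i up\<^sub>1 up\<^sub>2 = two_phase_lr y s \<theta>\<^sub>1 \<theta>\<^sub>2" unfolding grid_lr_def \<theta>\<^sub>1_def \<theta>\<^sub>2_def ..
  define B where "B = max (exp (\<bar>ln (\<theta>\<^sub>1 / y)\<bar> + \<bar>ln ((1 - \<theta>\<^sub>1) / (1 - y))\<bar>))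
                          (exp (\<bar>ln (\<theta>\<^sub>2 / y)\<bar> + \<bar>ln ((1 - \<theta>\<^sub>2) / (1 - y))\<bar>))"
  have bounds: "0 \<le> two_phase_lr y s \<theta>\<^sub>1 \<theta>\<^sub>2 t z \<and> two_phase_lr y s \<theta>\<^sub>1 \<theta>\<^sub>2 t z \<le> B" for t z
    unfolding two_phase_lr_def B_def using lr_factor_bounds[of y \<theta>\<^sub>1 z] lr_factor_bounds[of y \<theta>\<^sub>2 z] by auto
  have E: "expectation (\<lambda>\<omega>. two_phase_lr y s \<theta>\<^sub>1 \<theta>\<^sub>2 t (X t \<omega>)) \<le> 1" if "1 \<le> t" for t
  proof -
    have "random_variable borel (X t)" using ind that unfolding indep_vars_def by auto
    thus ?thesis
      unfolding two_phase_lr_def using expectation_lr_factor_le_1[OF y] \<theta> bounded mean that by auto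
  qed
  have "prob (grid_event M X y \<delta> s m p) \<le> 1 / exp (grid_level \<delta> s m)"
    unfolding grid_event_def p f prod.case
    by (rule ville_inequality[where f="two_phase_lr y s \<theta>\<^sub>1 \<theta>\<^sub>2" and B=B, OF ind _ bounds E])
       (auto simp: two_phase_lr_def)
  thus ?thesis by (simp add: exp_minus field_simps)
qed

lemma prob_UN_grid_events_le:
  assumes "0 < \<delta>" "\<delta> \<le> 1" "1 \<le> s"
  shows "prob (\<Union>p\<in>grid_params \<delta> s m. grid_event M X y \<delta> s m p)
           \<le> \<delta> / (9 * (real s * sqrt (real s))) * (1 / (1 + real m / 2)\<^sup>2)"
proof -
  have "prob (\<Union>p\<in>grid_params \<delta> s m. grid_event M X y \<delta> s m p)
          \<le> (\<Sum>p\<in>grid_params \<delta> s m. prob (grid_event M X y \<delta> s m p))"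
    using grid_event_in_events by (intro measure_UNION_le) (auto simp: grid_params_def)
  also have "\<dots> \<le> (\<Sum>p\<in>grid_params \<delta> s m. exp (- grid_level \<delta> s m))"
    by (intro sum_mono prob_grid_event_le)
  also have "\<dots> = 4 * real (grid_size \<delta> s m) * (real (grid_size \<delta> s m) + 1) * exp (- grid_level \<delta> s m)"
    by (simp add: card_grid_params algebra_simps)
  also have "\<dots> \<le> \<delta> / (9 * (real s * sqrt (real s)) * (1 + real m / 2)\<^sup>2)"
    using grid_cost_le[OF assms] .
  finally show ?thesis by simp
qed

lemma prob_grid_crossing_le:
  assumes "0 < \<delta>" "\<delta> \<le> 1"
  shows "prob (\<Union>s. \<Union>m. \<Union>p\<in>grid_params \<delta> (Suc s) m. grid_event M X y \<delta> (Suc s) m p) \<le> \<delta>"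
proof -
  have events: "(\<Union>p\<in>grid_params \<delta> s m. grid_event M X y \<delta> s m p) \<in> events" for s m
    using grid_event_in_events by (auto simp: grid_params_def)
  have "prob (\<Union>m. \<Union>p\<in>grid_params \<delta> (Suc s) m. grid_event M X y \<delta> (Suc s) m p)
          \<le> \<delta> / 3 * (1 / (real (Suc s) * sqrt (real (Suc s))))" for s
  proof -
    define C where "C = \<delta> / (9 * (real (Suc s) * sqrt (real (Suc s))))"
    have "prob (\<Union>m. \<Union>p\<in>grid_params \<delta> (Suc s) m. grid_event M X y \<delta> (Suc s) m p)
            \<le> (\<Sum>m. C * (1 / (1 + real m / 2)\<^sup>2))"
      using prob_UN_grid_events_le[OF assms, of "Suc s"] events
      by (intro prob_UN_le_suminf summable_mult[OF dyadic_scale_series(1)]) (simp_all add: C_def)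
    also have "\<dots> = C * (\<Sum>m. 1 / (1 + real m / 2)\<^sup>2)" by (rule suminf_mult[OF dyadic_scale_series(1)])
    also have "\<dots> \<le> C * 3" using dyadic_scale_series(2) assms by (intro mult_left_mono) (auto simp: C_def)
    finally show ?thesis unfolding C_def by simp
  qed
  hence "prob (\<Union>s. \<Union>m. \<Union>p\<in>grid_params \<delta> (Suc s) m. grid_event M X y \<delta> (Suc s) m p)
           \<le> (\<Sum>s. \<delta> / 3 * (1 / (real (Suc s) * sqrt (real (Suc s)))))"
    using events by (intro prob_UN_le_suminf summable_mult[OF three_halves_series(1)]) auto
  also have "\<dots> = \<delta> / 3 * (\<Sum>s. 1 / (real (Suc s) * sqrt (real (Suc s))))"
    by (rule suminf_mult[OF three_halves_series(1)])
  also have "\<dots> \<le> \<delta> / 3 * 3" using three_halves_series(2) assms by (intro mult_left_mono) auto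
  finally show ?thesis by simp
qed

lemma prob_glr_alarm_le:
  assumes "0 < \<delta>" "\<delta> \<le> 1"
  shows "prob {\<omega> \<in> space M. glr_tau X \<delta> \<omega> < \<infinity>} \<le> \<delta>"
proof -
  have "(\<Union>s. \<Union>m. \<Union>p\<in>grid_params \<delta> (Suc s) m. grid_event M X y \<delta> (Suc s) m p) \<in> events"
    using grid_event_in_events by (auto simp: grid_params_def)
  thus ?thesis
    using glr_alarm_subset_grid_events[where M=M and X=X, OF y assms bounded] prob_grid_crossing_le[OF assms]
    by (meson finite_measure_mono order.trans)
qed

end

end


lemma (in prob_space) AE_eq_boundary_expectation:
  fixes Z :: "'a \<Rightarrow> real"
  assumes "random_variable borel Z" "\<And>\<omega>. \<omega> \<in> space M \<Longrightarrow> 0 \<le> Z \<omega> \<and> Z \<omega> \<le> 1"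
    and "expectation Z = c" "c = 0 \<or> c = 1"
  shows "AE \<omega> in M. Z \<omega> = c"
proof -
  have iZ: "integrable M Z" using assms(1,2) by (intro integrable_const_bound[where B=1]) auto
  show ?thesis
  proof (cases "c = 0")
    case True
    thus ?thesis using integral_nonneg_eq_0_iff_AE[OF iZ] assms(2,3) by auto
  next
    case False
    hence "expectation (\<lambda>\<omega>. 1 - Z \<omega>) = 0" using iZ assms(3,4) by (simp add: prob_space)
    hence "AE \<omega> in M. 1 - Z \<omega> = 0"
      using integral_nonneg_eq_0_iff_AE[of M "\<lambda>\<omega>. 1 - Z \<omega>"] iZ assms(2) by auto
    thus ?thesis using False assms(4) by auto
  qed
qed

lemma (in prob_space) prob_glr_alarm_degenerate:
  assumes ind: "indep_vars (\<lambda>_. borel) X {1..}"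
    and bounded: "\<And>t \<omega>. 1 \<le> t \<Longrightarrow> \<omega> \<in> space M \<Longrightarrow> 0 \<le> X t \<omega> \<and> X t \<omega> \<le> 1"
    and mean: "\<And>t. 1 \<le> t \<Longrightarrow> expectation (X t) = y" and y: "y = 0 \<or> y = 1"
    and \<delta>: "0 < \<delta>" "\<delta> \<le> 1"
  shows "prob {\<omega> \<in> space M. glr_tau X \<delta> \<omega> < \<infinity>} = 0"
proof -
  have "AE \<omega> in M. X t \<omega> = y" if "1 \<le> t" for t
    using AE_eq_boundary_expectation[of "X t" y] ind bounded mean y that unfolding indep_vars_def by auto
  hence "AE \<omega> in M. \<forall>t. 1 \<le> t \<longrightarrow> X t \<omega> = y" by (simp add: AE_all_countable)
  then obtain N where N: "{\<omega> \<in> space M. \<not> (\<forall>t. 1 \<le> t \<longrightarrow> X t \<omega> = y)} \<subseteq> N"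
    "emeasure M N = 0" "N \<in> events"
    by (rule AE_E)
  have "{\<omega> \<in> space M. glr_tau X \<delta> \<omega> < \<infinity>} \<subseteq> N"
    using N(1) glr_tau_constant[of X _ y \<delta>] y \<delta> by fastforce
  hence "prob {\<omega> \<in> space M. glr_tau X \<delta> \<omega> < \<infinity>} \<le> prob N" using N(3) by (intro finite_measure_mono)
  moreover have "prob N = 0" using N(2) by (simp add: measure_def)
  ultimately show ?thesis using measure_nonneg[of M "{\<omega> \<in> space M. glr_tau X \<delta> \<omega> < \<infinity>}"] by linarith
qed

theorem lemma2:
  fixes M :: "'a measure" and X :: "nat \<Rightarrow> 'a \<Rightarrow> real" and \<mu>\<^sub>0 \<delta> :: real
  assumes "prob_space M"
    and "prob_space.indep_vars M (\<lambda>_. borel) X {1..}"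
    and "\<And>t \<omega>. t \<ge> 1 \<Longrightarrow> \<omega> \<in> space M \<Longrightarrow> 0 \<le> X t \<omega> \<and> X t \<omega> \<le> 1"
    and "0 \<le> \<mu>\<^sub>0" and "\<mu>\<^sub>0 \<le> 1"
    and "\<And>t. t \<ge> 1 \<Longrightarrow> prob_space.expectation M (X t) = \<mu>\<^sub>0"
    and "\<delta> > 0"
  shows "measure M {\<omega> \<in> space M. glr_tau X \<delta> \<omega> < \<infinity>} \<le> \<delta>"
proof -
  interpret prob_space M by fact
  consider "1 \<le> \<delta>" | "\<delta> < 1" "\<mu>\<^sub>0 = 0 \<or> \<mu>\<^sub>0 = 1" | "\<delta> < 1" "0 < \<mu>\<^sub>0" "\<mu>\<^sub>0 < 1"
    using assms(4,5) by linarith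
  thus ?thesis
  proof cases
    case 1
    thus ?thesis using prob_le_1 by (meson order.trans)
  next
    case 2
    thus ?thesis using prob_glr_alarm_degenerate[OF assms(2,3,6)] assms(7) by simp
  next
    case 3
    thus ?thesis using prob_glr_alarm_le[OF assms(2,3,6)] assms(7) by simp
  qed
qed

end
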